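(* Let $T>0$, $d\in\mathbb{N}$, and let $\mathcal{X}$ be the set of continuous piecewise linear paths $[0,T]\to\mathbb{R}^d$. For $X,Y\in\mathcal{X}$ and $s,t\in[0,T]$ set $$U(s,t) = k\big(X|_{[0,s]},\,Y|_{[0,t]}\big),\qquad \widetilde U(s,t) = k\big(\overleftarrow{X}|_{[0,s]},\,\overleftarrow{Y}|_{[0,t]}\big),$$ where $\overleftarrow{X}_r = X_{T-r}$ and $\overleftarrow{Y}_r=Y_{T-r}$ for $r\in[0,T]$ are the paths reversed in time. Then for every $\gamma\in\mathcal{X}$ the directional derivative of the signature kernel along $\gamma$ satisfies $$k_\gamma(X,Y) = \int_0^{T}\int_0^{T} U(s,t)\,\widetilde U(T-s,T-t)\,\big(\dot{\gamma}_s^{T}\dot{Y}_t\big)\,ds\,dt .$$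
   Context: For a continuous path $Z:[a,b]\to\mathbb{R}^d$ of bounded variation with coordinates $Z=(Z^{(1)},\dots,Z^{(d)})$, and a multi-index (word) $\boldsymbol\alpha=(\alpha_1,\dots,\alpha_j)$ with $\alpha_i\in\{1,\dots,d\}$, the signature coordinate is the iterated integral $S(Z)^{\boldsymbol\alpha}=\int_{a<s_1<\dots<s_j<b} dZ^{(\alpha_1)}_{s_1}\cdots dZ^{(\alpha_j)}_{s_j}$, with $S(Z)^{\emptyset}=1$ for the empty word ($j=0$). The signature kernel of two such paths $Z,W$ is $k(Z,W)=\sum_{j=0}^\infty\sum_{|\boldsymbol\alpha|=j} S(Z)^{\boldsymbol\alpha}S(W)^{\boldsymbol\alpha}$ (the inner sum over all words of length $j$). For a path restricted to $[0,s]$ the signature is taken over $[0,s]$. The directional derivative of $k$ along a path $\gamma$ is $k_\gamma(X,Y)=\frac{\partial}{\partial\epsilon}k(X+\epsilon\gamma,Y)\big|_{\epsilon=0}$. Dots denote time derivatives (defined almost everywhere for piecewise linear paths). *)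

theory Defs
  imports "HOL-Analysis.Analysis"
begin

text \<open>Continuous piecewise linear paths on [0,T]: there is a partition
  0 = p_0 < p_1 < ... < p_n = T such that the path is affine on each [p_k, p_(k+1)].
  (Affine pieces on closed intervals force continuity on [0,T].)\<close>
definition pw_linear :: "real \<Rightarrow> (real \<Rightarrow> real^'d) \<Rightarrow> bool" where
  "pw_linear T Z \<longleftrightarrow>
     (\<exists>p::real list. p \<noteq> [] \<and> hd p = 0 \<and> last p = T \<and> sorted_wrt (<) p \<and>
        (\<forall>k < length p - 1. \<exists>a b. \<forall>t\<in>{p!k..p!(Suc k)}. Z t = a + t *\<^sub>R b))"

text \<open>Time derivative of the path (defined almost everywhere for piecewise linear paths).\<close>
definition dot :: "(real \<Rightarrow> real^'d) \<Rightarrow> real \<Rightarrow> real^'d" where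
  "dot Z s = vector_derivative Z (at s)"

text \<open>Signature coordinate S(Z|_[a,b])^w as an iterated integral, integrating out the first
  time variable s_1 first:
  S^{(i) w}_{[a,b]} = \<integral>_a^b Zdot^(i)_s S^w_{[s,b]} ds,  S^{()} = 1.\<close>
fun sig :: "(real \<Rightarrow> real^'d) \<Rightarrow> real \<Rightarrow> real \<Rightarrow> 'd list \<Rightarrow> real" where
  "sig Z a b [] = 1"
| "sig Z a b (i # w) = integral {a..b} (\<lambda>s. (dot Z s $ i) * sig Z s b w)"

definition sigker :: "(real \<Rightarrow> real^'d) \<Rightarrow> real \<Rightarrow> real \<Rightarrow> (real \<Rightarrow> real^'d) \<Rightarrow> real \<Rightarrow> real \<Rightarrow> real" where
  "sigker Z a b W c e =
     (\<Sum>j. \<Sum>w\<in>{w::'d list. length w = j}. sig Z a b w * sig W c e w)"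

definition rev_path :: "real \<Rightarrow> (real \<Rightarrow> real^'d) \<Rightarrow> real \<Rightarrow> real^'d" where
  "rev_path T Z r = Z (T - r)"

end

theory Submission
  imports Defs
begin

text \<open>Write \<open>S\<^sup>w(Z)\<close> for the iterated integral of the velocity of \<open>Z\<close> along the word \<open>w\<close>, so
  that \<open>k(X, Y) = \<Sum>\<^sub>w S\<^sup>w(X) S\<^sup>w(Y)\<close>. Replacing \<open>X\<close> by \<open>X + \<epsilon>\<gamma>\<close> changes \<open>S\<^sup>w(X)\<close> by \<open>\<epsilon>\<close> times
  the sum, over the letters of \<open>w\<close>, of the iterated integral in which that letter is driven by
  \<open>\<gamma>'\<close> instead of \<open>X'\<close>, up to \<open>O(\<epsilon>\<^sup>2)\<close>; the factorial decay of iterated integrals makes the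
  kernel series differentiable term by term. Splitting \<open>w = u i v\<close> at the perturbed letter, and
  \<open>S\<^sup>w(Y)\<close> at the same letter by Chen's identity, turns the derivative into a double integral
  over \<open>(s, t)\<close> of a sum over \<open>u, i, v\<close>; summing over \<open>u\<close> and over \<open>v\<close> separately produces the
  kernels of the paths restricted to \<open>[0, s], [0, t]\<close> and to \<open>[s, T], [t, T]\<close>, and the latter
  is the kernel of the reversed paths on \<open>[0, T - s], [0, T - t]\<close>. Piecewise linear paths have
  bounded step-function velocities, and their finitely many kinks, where \<^const>\<open>dot\<close> is junk,
  are invisible to every integral.\<close>

section \<open>Integration on intervals\<close>

lemma set_integrable_Icc_bounded:
  fixes \<psi> :: "real \<Rightarrow> real"
  assumes [measurable]: "\<psi> \<in> borel_measurable borel" and "\<And>s. s \<in> {a..b} \<Longrightarrow> \<bar>\<psi> s\<bar> \<le> B"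
  shows "set_integrable lborel {a..b} \<psi>"
  unfolding set_integrable_def
  by (rule integrableI_bounded_set_indicator[where B=B])
     (use assms emeasure_bounded_finite[of "{a..b}"] in auto)

lemma integrable_on_Icc_bounded:
  fixes \<psi> :: "real \<Rightarrow> real"
  assumes "\<psi> \<in> borel_measurable borel" and "\<And>s. s \<in> {a..b} \<Longrightarrow> \<bar>\<psi> s\<bar> \<le> B"
  shows "\<psi> integrable_on {a..b}"
  using set_borel_integral_eq_integral(1)[OF set_integrable_Icc_bounded[OF assms]] .

lemma bounded_on_compact_image:
  fixes F :: "'a::topological_space \<Rightarrow> real"
  assumes "continuous_on S F" "compact S"
  obtains C where "\<And>x. x \<in> S \<Longrightarrow> \<bar>F x\<bar> \<le> C"
  using compact_imp_bounded[OF compact_continuous_image[OF assms]] bounded_real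
  by (metis image_eqI)

lemma bounded_on_square:
  fixes K :: "real \<Rightarrow> real \<Rightarrow> real"
  assumes "continuous_on UNIV (\<lambda>p. K (fst p) (snd p))"
  obtains C where "\<And>r s. r \<in> {a..b} \<Longrightarrow> s \<in> {a..b} \<Longrightarrow> \<bar>K r s\<bar> \<le> C"
proof -
  obtain C where C: "\<And>p. p \<in> {a..b} \<times> {a..b} \<Longrightarrow> \<bar>K (fst p) (snd p)\<bar> \<le> C"
    using bounded_on_compact_image[OF continuous_on_subset[OF assms subset_UNIV]
        compact_Times[OF compact_Icc[of a b] compact_Icc[of a b]]] by blast
  show ?thesis
  proof (rule that)
    fix r s assume "r \<in> {a..b}" "s \<in> {a..b}"
    then show "\<bar>K r s\<bar> \<le> C" using C[of "(r, s)"] by simp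
  qed
qed

lemma integrable_on_bounded_mult_continuous:
  fixes \<phi> g :: "real \<Rightarrow> real"
  assumes [measurable]: "\<phi> \<in> borel_measurable borel" and \<phi>: "\<And>t. \<bar>\<phi> t\<bar> \<le> M"
    and g: "continuous_on UNIV g"
  shows "(\<lambda>s. \<phi> s * g s) integrable_on {x..y}"
proof -
  have [measurable]: "g \<in> borel_measurable borel"
    using g by (rule borel_measurable_continuous_onI)
  obtain B where B: "\<And>s. s \<in> {x..y} \<Longrightarrow> \<bar>g s\<bar> \<le> B"
    using bounded_on_compact_image[OF continuous_on_subset[OF g]] by blast
  show ?thesis
  proof (rule integrable_on_Icc_bounded[where B="M*B"])
    fix s assume "s \<in> {x..y}"
    then show "\<bar>\<phi> s * g s\<bar> \<le> M * B"
      unfolding abs_mult using B \<phi> by (intro mult_mono) (auto intro: order_trans[OF abs_ge_zero \<phi>])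
  qed measurable
qed

lemma abs_integral_le_length:
  fixes h :: "real \<Rightarrow> real"
  assumes "h integrable_on {a..b}" "\<And>s. s \<in> {a..b} \<Longrightarrow> \<bar>h s\<bar> \<le> K"
  shows "\<bar>integral {a..b} h\<bar> \<le> K * max 0 (b - a)"
proof (cases "a \<le> b")
  case True
  have "norm (integral {a..b} h) \<le> integral {a..b} (\<lambda>_. K)"
    by (rule integral_norm_bound_integral) (use assms in auto)
  then show ?thesis using True by (simp add: mult.commute)
qed simp

lemma abs_integral_Icc_le:
  fixes h :: "real \<Rightarrow> real"
  assumes "h integrable_on {a..b}" "a \<in> {0..T}" "b \<in> {0..T}"
    and "\<And>s. s \<in> {a..b} \<Longrightarrow> \<bar>h s\<bar> \<le> K" "0 \<le> K"
  shows "\<bar>integral {a..b} h\<bar> \<le> K * T"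
proof -
  have "\<bar>integral {a..b} h\<bar> \<le> K * max 0 (b - a)"
    by (rule abs_integral_le_length) (use assms in auto)
  also have "\<dots> \<le> K * T"
    using assms by (intro mult_left_mono) auto
  finally show ?thesis .
qed

lemma abs_integral_endpoints_diff_le:
  fixes h :: "real \<Rightarrow> real"
  assumes h: "h integrable_on {c..e}" and hK: "\<And>s. s \<in> {c..e} \<Longrightarrow> \<bar>h s\<bar> \<le> K"
    and ab: "a \<in> {c..e}" "b \<in> {c..e}" "a' \<in> {c..e}" "b' \<in> {c..e}"
  shows "\<bar>integral {a..b} h - integral {a'..b'} h\<bar> \<le> K * (\<bar>a - a'\<bar> + \<bar>b - b'\<bar>)"
proof -
  define H where "H x = integral {c..x} h" for x
  have sub: "h integrable_on {x..y}" if "x \<in> {c..e}" "y \<in> {c..e}" for x y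
    using h that by (auto intro: integrable_subinterval_real)
  have I: "integral {x..y} h = H y - H x" if "x \<in> {c..e}" "y \<in> {c..e}" "x \<le> y" for x y
    using Henstock_Kurzweil_Integration.integral_combine[of c x y h] sub[of c y] that
    unfolding H_def by auto
  have bnd: "\<bar>integral {x..y} h\<bar> \<le> K * max 0 (y - x)" if "x \<in> {c..e}" "y \<in> {c..e}" for x y
    by (rule abs_integral_le_length) (use that sub hK in auto)
  have K0: "0 \<le> K" using hK[of a] ab by auto
  have HH: "\<bar>H x - H y\<bar> \<le> K * \<bar>x - y\<bar>" if "x \<in> {c..e}" "y \<in> {c..e}" for x y
  proof (cases "x \<le> y")
    case True
    then show ?thesis using I[OF that True] bnd[OF that] by (simp add: abs_minus_commute)
  next
    case False
    then show ?thesis using I[OF that(2,1)] bnd[OF that(2,1)] by simp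
  qed
  consider "a \<le> b" "a' \<le> b'" | "b < a" | "b' < a'" by linarith
  then show ?thesis
  proof cases
    case 1
    then have "\<bar>integral {a..b} h - integral {a'..b'} h\<bar> = \<bar>(H b - H b') - (H a - H a')\<bar>"
      using I ab by simp
    also have "\<dots> \<le> K * \<bar>b - b'\<bar> + K * \<bar>a - a'\<bar>"
      using HH[of b b'] HH[of a a'] ab by linarith
    finally show ?thesis by (simp add: algebra_simps)
  next
    case 2
    then show ?thesis using bnd[of a' b'] ab K0 by (auto intro: order_trans[OF _ mult_left_mono])
  next
    case 3
    then show ?thesis using bnd[of a b] ab K0 by (auto intro: order_trans[OF _ mult_left_mono])
  qed
qed

lemma integral_reflect_shift:
  "integral {a..b} (\<lambda>r. H (T - r)) = integral {T - b..T - a} H"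
  for H :: "real \<Rightarrow> real"
proof -
  have "integral {a..b} (\<lambda>r. H (T - r)) = integral {-b..-a} (H \<circ> (+) T)"
    using Henstock_Kurzweil_Integration.integral_reflect_real[where f="\<lambda>r. H (T - r)"]
    by (simp add: o_def)
  also have "\<dots> = integral {T - b..T - a} H"
    using integral_shift_Icc_real[of "-b" "-a" H T] by (simp add: algebra_simps)
  finally show ?thesis .
qed

lemma lebesgue_integral_indicator_Icc:
  fixes f :: "real \<Rightarrow> real"
  assumes "f \<in> borel_measurable borel" and "\<And>s. s \<in> {a..b} \<Longrightarrow> \<bar>f s\<bar> \<le> B"
  shows "(\<integral>s. indicator {a..b} s * f s \<partial>lborel) = integral {a..b} f"
  using set_borel_integral_eq_integral(2)[OF set_integrable_Icc_bounded[OF assms]]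
  by (simp add: set_lebesgue_integral_def)

lemma integrable_indicator_square_bounded:
  fixes H :: "real \<Rightarrow> real \<Rightarrow> real"
  assumes [measurable]: "(\<lambda>p. H (fst p) (snd p)) \<in> borel_measurable (lborel \<Otimes>\<^sub>M lborel)"
    and bnd: "\<And>r s. r \<in> {a..b} \<Longrightarrow> s \<in> {a..b} \<Longrightarrow> \<bar>H r s\<bar> \<le> B"
  shows "integrable (lborel \<Otimes>\<^sub>M lborel) (\<lambda>(r, s). indicator {a..b} r * indicator {a..b} s * H r s)"
proof (rule integrableI_bounded_set[where A="{a..b} \<times> {a..b}" and B=B])
  show "emeasure (lborel \<Otimes>\<^sub>M lborel) ({a..b} \<times> {a..b}) < \<infinity>"
    unfolding lborel_prod by (rule emeasure_bounded_finite) (simp add: bounded_Times)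
  show "(\<lambda>(r, s). indicator {a..b} r * indicator {a..b} s * H r s) \<in> borel_measurable (lborel \<Otimes>\<^sub>M lborel)"
    by measurable
  show "AE p in lborel \<Otimes>\<^sub>M lborel. p \<in> {a..b} \<times> {a..b} \<longrightarrow>
      norm (case p of (r, s) \<Rightarrow> indicator {a..b} r * indicator {a..b} s * H r s) \<le> B"
    by (intro AE_I2) (auto simp: bnd)
qed (auto intro!: AE_I2 simp: indicator_def)

lemma integral_swap_Icc_bounded:
  fixes H :: "real \<Rightarrow> real \<Rightarrow> real"
  assumes meas [measurable]: "(\<lambda>p. H (fst p) (snd p)) \<in> borel_measurable (lborel \<Otimes>\<^sub>M lborel)"
    and bnd: "\<And>r s. r \<in> {a..b} \<Longrightarrow> s \<in> {a..b} \<Longrightarrow> \<bar>H r s\<bar> \<le> B"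
  shows "(\<lambda>r. integral {a..b} (H r)) integrable_on {a..b}"
    and "integral {a..b} (\<lambda>r. integral {a..b} (H r)) = integral {a..b} (\<lambda>s. integral {a..b} (\<lambda>r. H r s))"
proof -
  have row_meas: "H r \<in> borel_measurable borel" and col_meas: "(\<lambda>r. H r s) \<in> borel_measurable borel" for r s
    using measurable_Pair2[OF meas, of r] measurable_Pair1[OF meas, of s] by simp_all
  define F where "F r s = indicator {a..b} r * indicator {a..b} s * H r s" for r s
  note int = integrable_indicator_square_bounded[where a=a and b=b and B=B, OF meas bnd, folded F_def]
  have row: "(\<integral>s. F r s \<partial>lborel) = indicator {a..b} r * integral {a..b} (H r)" for r
  proof (cases "r \<in> {a..b}")
    case True
    then show ?thesis
      using lebesgue_integral_indicator_Icc[OF row_meas bnd[OF True]] by (simp add: F_def mult.assoc)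
  qed (simp add: F_def)
  have col: "(\<integral>r. F r s \<partial>lborel) = indicator {a..b} s * integral {a..b} (\<lambda>r. H r s)" for s
  proof (cases "s \<in> {a..b}")
    case True
    then show ?thesis
      using lebesgue_integral_indicator_Icc[OF col_meas bnd[OF _ True]] by (simp add: F_def mult_ac)
  qed (simp add: F_def)
  have outer: "set_integrable lborel {a..b} (\<lambda>r. integral {a..b} (H r))"
    using lborel_pair.integrable_fst[OF int] by (simp add: row set_integrable_def)
  then show "(\<lambda>r. integral {a..b} (H r)) integrable_on {a..b}"
    by (rule set_borel_integral_eq_integral(1))
  have outer': "set_integrable lborel {a..b} (\<lambda>s. integral {a..b} (\<lambda>r. H r s))"
    using lborel_pair.integrable_snd[OF int] by (simp add: col set_integrable_def)
  have "integral {a..b} (\<lambda>r. integral {a..b} (H r)) = (\<integral>r. \<integral>s. F r s \<partial>lborel \<partial>lborel)"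
    using set_borel_integral_eq_integral(2)[OF outer] by (simp add: row set_lebesgue_integral_def)
  also have "\<dots> = (\<integral>s. \<integral>r. F r s \<partial>lborel \<partial>lborel)"
    using lborel_pair.Fubini_integral[OF int] by simp
  also have "\<dots> = integral {a..b} (\<lambda>s. integral {a..b} (\<lambda>r. H r s))"
    using set_borel_integral_eq_integral(2)[OF outer'] by (simp add: col set_lebesgue_integral_def)
  finally show "integral {a..b} (\<lambda>r. integral {a..b} (H r)) = integral {a..b} (\<lambda>s. integral {a..b} (\<lambda>r. H r s))" .
qed

lemma integral_swap_triangle:
  fixes \<phi> \<psi> :: "real \<Rightarrow> real" and K :: "real \<Rightarrow> real \<Rightarrow> real"
  assumes [measurable]: "\<phi> \<in> borel_measurable borel" "\<psi> \<in> borel_measurable borel"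
    and \<phi>: "\<And>t. t \<in> {a..b} \<Longrightarrow> \<bar>\<phi> t\<bar> \<le> A" and \<psi>: "\<And>t. t \<in> {a..b} \<Longrightarrow> \<bar>\<psi> t\<bar> \<le> B"
    and K: "continuous_on UNIV (\<lambda>p. K (fst p) (snd p))"
  shows "(\<lambda>r. \<phi> r * integral {r..b} (\<lambda>s. K r s * \<psi> s)) integrable_on {a..b}"
    and "integral {a..b} (\<lambda>r. \<phi> r * integral {r..b} (\<lambda>s. K r s * \<psi> s))
       = integral {a..b} (\<lambda>s. integral {a..s} (\<lambda>r. \<phi> r * K r s) * \<psi> s)"
proof -
  have [measurable]: "(\<lambda>p. K (fst p) (snd p)) \<in> borel_measurable (lborel \<Otimes>\<^sub>M lborel)"
    using borel_measurable_continuous_onI[OF K]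
    by (simp add: borel_prod[symmetric] measurable_cong_sets[OF sets_pair_measure_cong[OF sets_lborel sets_lborel] refl])
  obtain C where C: "\<And>r s. r \<in> {a..b} \<Longrightarrow> s \<in> {a..b} \<Longrightarrow> \<bar>K r s\<bar> \<le> C"
    using bounded_on_square[OF K, where a=a and b=b] by blast
  define H where "H r s = (if r \<le> s then \<phi> r * (K r s * \<psi> s) else 0)" for r s
  have H_meas: "(\<lambda>p. H (fst p) (snd p)) \<in> borel_measurable (lborel \<Otimes>\<^sub>M lborel)"
    unfolding H_def by measurable
  have H_bnd: "\<bar>H r s\<bar> \<le> A * C * B" if "r \<in> {a..b}" "s \<in> {a..b}" for r s
  proof -
    have "0 \<le> A" "0 \<le> B" "\<bar>K r s\<bar> \<le> C"
      using \<phi>[of r] \<psi>[of s] C[of r s] that by auto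
    then have "\<bar>\<phi> r * (K r s * \<psi> s)\<bar> \<le> A * (C * B)"
      unfolding abs_mult using that \<phi> \<psi> by (intro mult_mono) auto
    moreover have "0 \<le> A * (C * B)"
      using \<open>0 \<le> A\<close> \<open>0 \<le> B\<close> \<open>\<bar>K r s\<bar> \<le> C\<close> by simp
    ultimately show ?thesis by (simp add: H_def mult.assoc)
  qed
  have rows: "integral {a..b} (H r) = \<phi> r * integral {r..b} (\<lambda>s. K r s * \<psi> s)" if "r \<in> {a..b}" for r
  proof -
    have "H r = (\<lambda>s. if s \<in> {r..} then \<phi> r * (K r s * \<psi> s) else 0)"
      by (auto simp: H_def)
    moreover have "{r..} \<inter> {a..b} = {r..b}" using that by auto
    ultimately show ?thesis by (simp only: integral_restrict_Int integral_mult_right)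
  qed
  have cols: "integral {a..b} (\<lambda>r. H r s) = integral {a..s} (\<lambda>r. \<phi> r * K r s) * \<psi> s" if "s \<in> {a..b}" for s
  proof -
    have "(\<lambda>r. H r s) = (\<lambda>r. if r \<in> {..s} then \<phi> r * K r s * \<psi> s else 0)"
      by (auto simp: H_def mult.assoc)
    moreover have "{..s} \<inter> {a..b} = {a..s}" using that by auto
    ultimately show ?thesis by (simp only: integral_restrict_Int integral_mult_left)
  qed
  note swap = integral_swap_Icc_bounded[where H=H and a=a and b=b and B="A * C * B", OF H_meas H_bnd]
  show "(\<lambda>r. \<phi> r * integral {r..b} (\<lambda>s. K r s * \<psi> s)) integrable_on {a..b}"
    using integrable_eq[OF swap(1)] rows by simp
  have "integral {a..b} (\<lambda>r. \<phi> r * integral {r..b} (\<lambda>s. K r s * \<psi> s))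
      = integral {a..b} (\<lambda>r. integral {a..b} (H r))"
    by (rule integral_cong) (simp add: rows)
  also have "\<dots> = integral {a..b} (\<lambda>s. integral {a..b} (\<lambda>r. H r s))"
    by (rule swap(2))
  also have "\<dots> = integral {a..b} (\<lambda>s. integral {a..s} (\<lambda>r. \<phi> r * K r s) * \<psi> s)"
    by (rule integral_cong) (simp add: cols)
  finally show "integral {a..b} (\<lambda>r. \<phi> r * integral {r..b} (\<lambda>s. K r s * \<psi> s))
       = integral {a..b} (\<lambda>s. integral {a..s} (\<lambda>r. \<phi> r * K r s) * \<psi> s)" .
qed

definition lipschitz_on_squares :: "(real \<Rightarrow> real \<Rightarrow> real) \<Rightarrow> bool" where
  "lipschitz_on_squares F \<longleftrightarrow>
     (\<forall>c e. \<exists>L. \<forall>a\<in>{c..e}. \<forall>b\<in>{c..e}. \<forall>a'\<in>{c..e}. \<forall>b'\<in>{c..e}.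
        \<bar>F a b - F a' b'\<bar> \<le> L * (\<bar>a - a'\<bar> + \<bar>b - b'\<bar>))"

lemma lipschitz_on_squares_continuous:
  assumes "lipschitz_on_squares F"
  shows "continuous_on UNIV (\<lambda>p. F (fst p) (snd p))"
proof (rule continuous_at_imp_continuous_on, intro ballI)
  fix p :: "real \<times> real"
  define c where "c = min (fst p) (snd p) - 1"
  define e where "e = max (fst p) (snd p) + 1"
  obtain L where L: "\<forall>a\<in>{c..e}. \<forall>b\<in>{c..e}. \<forall>a'\<in>{c..e}. \<forall>b'\<in>{c..e}.
      \<bar>F a b - F a' b'\<bar> \<le> L * (\<bar>a - a'\<bar> + \<bar>b - b'\<bar>)"
    using assms unfolding lipschitz_on_squares_def by blast
  have "lipschitz_on (2 * \<bar>L\<bar>) ({c..e} \<times> {c..e}) (\<lambda>p. F (fst p) (snd p))"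
  proof (rule lipschitz_onI)
    fix x y :: "real \<times> real" assume "x \<in> {c..e} \<times> {c..e}" "y \<in> {c..e} \<times> {c..e}"
    then have "fst x \<in> {c..e}" "snd x \<in> {c..e}" "fst y \<in> {c..e}" "snd y \<in> {c..e}"
      by (simp_all add: mem_Times_iff)
    then have "\<bar>F (fst x) (snd x) - F (fst y) (snd y)\<bar> \<le> L * (\<bar>fst x - fst y\<bar> + \<bar>snd x - snd y\<bar>)"
      using L by blast
    also have "\<dots> \<le> \<bar>L\<bar> * (dist x y + dist x y)"
      using dist_fst_le[of x y] dist_snd_le[of x y] unfolding dist_real_def
      by (intro mult_mono) simp_all
    finally show "dist (F (fst x) (snd x)) (F (fst y) (snd y)) \<le> 2 * \<bar>L\<bar> * dist x y"
      by (simp add: dist_real_def)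
  qed simp
  then have "continuous_on ({c<..<e} \<times> {c<..<e}) (\<lambda>p. F (fst p) (snd p))"
    by (rule continuous_on_subset[OF lipschitz_on_continuous_on]) auto
  moreover have "p \<in> {c<..<e} \<times> {c<..<e}"
    by (auto simp: c_def e_def mem_Times_iff)
  ultimately show "isCont (\<lambda>p. F (fst p) (snd p)) p"
    using continuous_on_eq_continuous_at[OF open_Times[OF open_greaterThanLessThan open_greaterThanLessThan]]
    by blast
qed

lemma lipschitz_on_squares_integral:
  fixes \<phi> :: "real \<Rightarrow> real" and G :: "real \<Rightarrow> real \<Rightarrow> real"
  assumes [measurable]: "\<phi> \<in> borel_measurable borel" and \<phi>: "\<And>t. \<bar>\<phi> t\<bar> \<le> M"
    and G: "lipschitz_on_squares G"
  shows "lipschitz_on_squares (\<lambda>a b. integral {a..b} (\<lambda>s. \<phi> s * G s b))"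
  unfolding lipschitz_on_squares_def
proof (intro allI)
  fix c e :: real
  have M0: "0 \<le> M" using \<phi>[of 0] by linarith
  have G_cont: "continuous_on UNIV (\<lambda>s. G s b)" for b
    using continuous_on_compose2[OF lipschitz_on_squares_continuous[OF G]
        continuous_on_Pair[OF continuous_on_id continuous_on_const]] by simp
  obtain L where L: "\<forall>a\<in>{c..e}. \<forall>b\<in>{c..e}. \<forall>a'\<in>{c..e}. \<forall>b'\<in>{c..e}.
      \<bar>G a b - G a' b'\<bar> \<le> L * (\<bar>a - a'\<bar> + \<bar>b - b'\<bar>)"
    using G unfolding lipschitz_on_squares_def by blast
  obtain B where B: "\<And>r s. r \<in> {c..e} \<Longrightarrow> s \<in> {c..e} \<Longrightarrow> \<bar>G r s\<bar> \<le> B"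
    using bounded_on_square[OF lipschitz_on_squares_continuous[OF G], where a=c and b=e] by blast
  have int: "(\<lambda>s. \<phi> s * G s b) integrable_on {x..y}" for b x y
    by (rule integrable_on_bounded_mult_continuous[OF _ \<phi> G_cont]) simp
  show "\<exists>K. \<forall>a\<in>{c..e}. \<forall>b\<in>{c..e}. \<forall>a'\<in>{c..e}. \<forall>b'\<in>{c..e}.
      \<bar>integral {a..b} (\<lambda>s. \<phi> s * G s b) - integral {a'..b'} (\<lambda>s. \<phi> s * G s b')\<bar>
        \<le> K * (\<bar>a - a'\<bar> + \<bar>b - b'\<bar>)"
  proof (intro exI[of _ "M * \<bar>L\<bar> * (e - c) + M * B"] ballI)
    fix a b a' b' assume box: "a \<in> {c..e}" "b \<in> {c..e}" "a' \<in> {c..e}" "b' \<in> {c..e}"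
    have "\<bar>integral {a..b} (\<lambda>s. \<phi> s * (G s b - G s b'))\<bar> \<le> M * (\<bar>L\<bar> * \<bar>b - b'\<bar>) * max 0 (b - a)"
    proof (rule abs_integral_le_length)
      show "(\<lambda>s. \<phi> s * (G s b - G s b')) integrable_on {a..b}"
        by (rule integrable_on_bounded_mult_continuous[OF _ \<phi>]) (auto intro!: continuous_intros G_cont)
      fix s assume "s \<in> {a..b}"
      then have "s \<in> {c..e}" using box by auto
      then have "\<bar>G s b - G s b'\<bar> \<le> L * (\<bar>s - s\<bar> + \<bar>b - b'\<bar>)"
        using L box by blast
      also have "\<dots> \<le> \<bar>L\<bar> * \<bar>b - b'\<bar>"
        by (simp add: mult_right_mono)
      finally have "\<bar>G s b - G s b'\<bar> \<le> \<bar>L\<bar> * \<bar>b - b'\<bar>" .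
      then show "\<bar>\<phi> s * (G s b - G s b')\<bar> \<le> M * (\<bar>L\<bar> * \<bar>b - b'\<bar>)"
        unfolding abs_mult by (intro mult_mono \<phi> M0) auto
    qed
    also have "\<dots> \<le> M * (\<bar>L\<bar> * \<bar>b - b'\<bar>) * (e - c)"
      using box M0 by (intro mult_left_mono) auto
    finally have change_integrand: "\<bar>integral {a..b} (\<lambda>s. \<phi> s * G s b) - integral {a..b} (\<lambda>s. \<phi> s * G s b')\<bar>
        \<le> M * (\<bar>L\<bar> * \<bar>b - b'\<bar>) * (e - c)"
      by (simp add: integral_diff[OF int int, symmetric] algebra_simps)
    have change_endpoints: "\<bar>integral {a..b} (\<lambda>s. \<phi> s * G s b') - integral {a'..b'} (\<lambda>s. \<phi> s * G s b')\<bar>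
        \<le> M * B * (\<bar>a - a'\<bar> + \<bar>b - b'\<bar>)"
    proof (rule abs_integral_endpoints_diff_le[OF int _ box])
      fix s assume "s \<in> {c..e}"
      then show "\<bar>\<phi> s * G s b'\<bar> \<le> M * B"
        unfolding abs_mult using box B[of s b'] by (intro mult_mono \<phi> M0) auto
    qed
    have "0 \<le> M * \<bar>L\<bar> * (e - c) * \<bar>a - a'\<bar>"
      using box M0 by simp
    moreover have "(M * \<bar>L\<bar> * (e - c) + M * B) * (\<bar>a - a'\<bar> + \<bar>b - b'\<bar>)
        = M * \<bar>L\<bar> * (e - c) * \<bar>a - a'\<bar> + M * (\<bar>L\<bar> * \<bar>b - b'\<bar>) * (e - c)
          + M * B * (\<bar>a - a'\<bar> + \<bar>b - b'\<bar>)"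
      by (simp add: algebra_simps)
    ultimately show "\<bar>integral {a..b} (\<lambda>s. \<phi> s * G s b) - integral {a'..b'} (\<lambda>s. \<phi> s * G s b')\<bar>
        \<le> (M * \<bar>L\<bar> * (e - c) + M * B) * (\<bar>a - a'\<bar> + \<bar>b - b'\<bar>)"
      using change_integrand change_endpoints by linarith
  qed
qed

section \<open>Iterated integrals\<close>

definition bounded_measurable :: "real \<Rightarrow> (real \<Rightarrow> real^'d) \<Rightarrow> bool" where
  "bounded_measurable M f \<longleftrightarrow>
     (\<forall>i. (\<lambda>t. f t $ i) \<in> borel_measurable borel) \<and> (\<forall>t i. \<bar>f t $ i\<bar> \<le> M)"

lemma bounded_measurable_measurable [measurable_dest]:
  "bounded_measurable M f \<Longrightarrow> (\<lambda>t. f t $ i) \<in> borel_measurable borel"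
  by (simp add: bounded_measurable_def)

lemma bounded_measurable_bound: "bounded_measurable M f \<Longrightarrow> \<bar>f t $ i\<bar> \<le> M"
  by (simp add: bounded_measurable_def)

lemma bounded_measurable_nonneg: "bounded_measurable M f \<Longrightarrow> 0 \<le> M"
  using bounded_measurable_bound[of M f 0 undefined] by linarith

lemma bounded_measurable_mono: "bounded_measurable M f \<Longrightarrow> M \<le> M' \<Longrightarrow> bounded_measurable M' f"
  unfolding bounded_measurable_def by (meson order_trans)

lemma bounded_measurable_add_scaleR:
  assumes x: "bounded_measurable M x" and g: "bounded_measurable M g" and e: "\<bar>e\<bar> \<le> 1"
  shows "bounded_measurable (2 * M) (\<lambda>s. x s + e *\<^sub>R g s)"
  unfolding bounded_measurable_def
proof (intro conjI allI)
  fix i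
  show "(\<lambda>t. (x t + e *\<^sub>R g t) $ i) \<in> borel_measurable borel"
    using x g by simp
  fix t
  have "\<bar>e * g t $ i\<bar> \<le> 1 * M"
    unfolding abs_mult using e bounded_measurable_bound[OF g] by (intro mult_mono) auto
  then show "\<bar>(x t + e *\<^sub>R g t) $ i\<bar> \<le> 2 * M"
    using bounded_measurable_bound[OF x, of t i] by simp
qed

text \<open>\<^const>\<open>sig\<close> is the case \<^term>\<open>f = dot Z\<close>. Freeing the velocity from the path lets us change
  it on null sets and perturb it linearly.\<close>
fun iter_int :: "(real \<Rightarrow> real^'d) \<Rightarrow> real \<Rightarrow> real \<Rightarrow> 'd list \<Rightarrow> real" where
  "iter_int f a b [] = 1"
| "iter_int f a b (i # w) = integral {a..b} (\<lambda>s. f s $ i * iter_int f s b w)"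

lemma sig_eq_iter_int: "sig Z a b w = iter_int (dot Z) a b w"
  by (induction w arbitrary: a) simp_all

lemma iter_int_empty_interval: "b < a \<Longrightarrow> iter_int f a b w = (if w = [] then 1 else 0)"
  by (cases w) auto

lemma lipschitz_on_squares_iter_int:
  assumes "bounded_measurable M f"
  shows "lipschitz_on_squares (\<lambda>a b. iter_int f a b w)"
proof (induction w)
  case Nil
  show ?case unfolding lipschitz_on_squares_def by (intro allI exI[of _ 0]) simp
next
  case (Cons i w)
  then show ?case
    using lipschitz_on_squares_integral[OF _ bounded_measurable_bound[OF assms]] assms by simp
qed

lemma continuous_on_iter_int:
  "bounded_measurable M f \<Longrightarrow> continuous_on UNIV (\<lambda>p. iter_int f (fst p) (snd p) w)"
  by (rule lipschitz_on_squares_continuous[OF lipschitz_on_squares_iter_int])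

lemma continuous_on_iter_int_start:
  "bounded_measurable M f \<Longrightarrow> continuous_on UNIV (\<lambda>s. iter_int f s b w)"
  using continuous_on_compose2[OF continuous_on_iter_int
      continuous_on_Pair[OF continuous_on_id continuous_on_const]] by simp

lemma continuous_on_iter_int_end:
  "bounded_measurable M f \<Longrightarrow> continuous_on UNIV (\<lambda>s. iter_int f a s w)"
  using continuous_on_compose2[OF continuous_on_iter_int
      continuous_on_Pair[OF continuous_on_const continuous_on_id]] by simp

lemma borel_measurable_iter_int_start [measurable]:
  "bounded_measurable M f \<Longrightarrow> (\<lambda>s. iter_int f s b w) \<in> borel_measurable borel"
  by (rule borel_measurable_continuous_onI[OF continuous_on_iter_int_start])

lemma integrable_on_iter_int_mult_diff:
  fixes f g h :: "real \<Rightarrow> real^'d"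
  assumes f: "bounded_measurable M f" and g: "bounded_measurable M' g" and h: "bounded_measurable M'' h"
  shows "(\<lambda>s. iter_int f a s u * g s $ j * (iter_int h s b v - c * iter_int f s b v)) integrable_on {a..b}"
proof -
  have "(\<lambda>s. g s $ j * (iter_int f a s u * (iter_int h s b v - c * iter_int f s b v))) integrable_on {a..b}"
    using f g h
    by (intro integrable_on_bounded_mult_continuous[OF _ bounded_measurable_bound[OF g]])
       (auto intro!: continuous_intros continuous_on_iter_int_start continuous_on_iter_int_end)
  then show ?thesis by (simp add: mult_ac)
qed

lemma integrable_on_iter_int_mult:
  fixes f g h :: "real \<Rightarrow> real^'d"
  assumes "bounded_measurable M f" "bounded_measurable M' g" "bounded_measurable M'' h"
  shows "(\<lambda>s. iter_int f a s u * g s $ j * iter_int h s b v) integrable_on {a..b}"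
  using integrable_on_iter_int_mult_diff[OF assms, of a u j b v 0] by simp

lemma iter_int_append_Cons:
  assumes f: "bounded_measurable M f"
  shows "iter_int f a b (u @ i # v) = integral {a..b} (\<lambda>s. iter_int f a s u * f s $ i * iter_int f s b v)"
proof (induction u arbitrary: a)
  case Nil
  then show ?case by simp
next
  case (Cons j u)
  obtain B where B: "\<And>r s. r \<in> {a..b} \<Longrightarrow> s \<in> {a..b} \<Longrightarrow> \<bar>iter_int f r s v\<bar> \<le> B"
    using bounded_on_square[OF continuous_on_iter_int[OF f], where a=a and b=b] by blast
  have "iter_int f a b ((j # u) @ i # v)
      = integral {a..b} (\<lambda>r. f r $ j * integral {r..b} (\<lambda>s. iter_int f r s u * (f s $ i * iter_int f s b v)))"
    by (simp add: Cons.IH mult.assoc)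
  also have "\<dots> = integral {a..b} (\<lambda>s. integral {a..s} (\<lambda>r. f r $ j * iter_int f r s u) * (f s $ i * iter_int f s b v))"
  proof (rule integral_swap_triangle(2))
    show "(\<lambda>s. f s $ i * iter_int f s b v) \<in> borel_measurable borel"
      using f borel_measurable_iter_int_start[OF f] by measurable
    show "\<bar>f s $ i * iter_int f s b v\<bar> \<le> M * B" if "s \<in> {a..b}" for s
      unfolding abs_mult using that B[of s b] bounded_measurable_nonneg[OF f]
      by (intro mult_mono bounded_measurable_bound[OF f]) auto
  qed (use f in \<open>auto intro: bounded_measurable_bound continuous_on_iter_int\<close>)
  also have "\<dots> = integral {a..b} (\<lambda>s. iter_int f a s (j # u) * f s $ i * iter_int f s b v)"
    by (simp add: mult.assoc)
  finally show ?case .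
qed

lemma iter_int_snoc:
  "bounded_measurable M f \<Longrightarrow> iter_int f a b (u @ [i]) = integral {a..b} (\<lambda>s. iter_int f a s u * f s $ i)"
  using iter_int_append_Cons[of M f a b u i "[]"] by simp

lemma iter_int_reverse:
  assumes f: "bounded_measurable M f"
  shows "iter_int (\<lambda>r. - f (T - r)) a b w = (-1) ^ length w * iter_int f (T - b) (T - a) (rev w)"
proof (induction w arbitrary: a)
  case Nil
  then show ?case by simp
next
  case (Cons i w)
  have "iter_int (\<lambda>r. - f (T - r)) a b (i # w)
     = integral {a..b} (\<lambda>r. (\<lambda>s. (-1) ^ Suc (length w) * (iter_int f (T - b) s (rev w) * f s $ i)) (T - r))"
    by (simp add: Cons.IH algebra_simps)
  also have "\<dots> = integral {T - b..T - a} (\<lambda>s. (-1) ^ Suc (length w) * (iter_int f (T - b) s (rev w) * f s $ i))"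
    by (rule integral_reflect_shift)
  also have "\<dots> = (-1) ^ length (i # w) * iter_int f (T - b) (T - a) (rev (i # w))"
    by (simp add: iter_int_snoc[OF f])
  finally show ?case .
qed

lemma abs_iter_int_le:
  assumes f: "bounded_measurable M f" and "a \<le> b"
  shows "\<bar>iter_int f a b w\<bar> \<le> (M * (b - a)) ^ length w / fact (length w)"
  using \<open>a \<le> b\<close>
proof (induction w arbitrary: a)
  case Nil
  then show ?case by simp
next
  case (Cons i w)
  define n where "n = length w"
  have M0: "0 \<le> M" using bounded_measurable_nonneg[OF f] .
  have "((\<lambda>s. - ((M * (b - s)) ^ Suc n / fact (Suc n))) has_real_derivative
      M * ((M * (b - s)) ^ n / fact n)) (at s within {a..b})" for s
  proof -
    have "((\<lambda>s. (M * (b - s)) ^ Suc n) has_real_derivative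
        real (Suc n) * (M * (b - s)) ^ n * (- M)) (at s within {a..b})"
      by (rule derivative_eq_intros refl)+ (cases n, auto simp: algebra_simps)
    then have "((\<lambda>s. - ((M * (b - s)) ^ Suc n / fact (Suc n))) has_real_derivative
        - (real (Suc n) * (M * (b - s)) ^ n * (- M) / fact (Suc n))) (at s within {a..b})"
      by (intro derivative_intros DERIV_cdivide)
    moreover have "- (real (Suc n) * (M * (b - s)) ^ n * (- M) / fact (Suc n)) = M * ((M * (b - s)) ^ n / fact n)"
      by (simp add: fact_Suc del: of_nat_Suc)
    ultimately show ?thesis by (simp only:)
  qed
  then have antiderivative: "((\<lambda>s. M * ((M * (b - s)) ^ n / fact n)) has_integral
      (M * (b - a)) ^ Suc n / fact (Suc n)) {a..b}"
    using fundamental_theorem_of_calculus[of a b "\<lambda>s. - ((M * (b - s)) ^ Suc n / fact (Suc n))"] Cons.prems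
    by (simp add: has_real_derivative_iff_has_vector_derivative)
  have "\<bar>iter_int f a b (i # w)\<bar> \<le> integral {a..b} (\<lambda>s. M * ((M * (b - s)) ^ n / fact n))"
    unfolding iter_int.simps real_norm_def[symmetric]
  proof (rule integral_norm_bound_integral)
    show "(\<lambda>s. f s $ i * iter_int f s b w) integrable_on {a..b}"
      by (rule integrable_on_bounded_mult_continuous[OF _ bounded_measurable_bound[OF f]
            continuous_on_iter_int_start[OF f]]) (use f in simp)
    show "(\<lambda>s. M * ((M * (b - s)) ^ n / fact n)) integrable_on {a..b}"
      using antiderivative by blast
    fix s assume "s \<in> {a..b}"
    then have "\<bar>iter_int f s b w\<bar> \<le> (M * (b - s)) ^ n / fact n"
      using Cons.IH[of s] unfolding n_def by auto
    then show "norm (f s $ i * iter_int f s b w) \<le> M * ((M * (b - s)) ^ n / fact n)"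
      unfolding real_norm_def abs_mult by (intro mult_mono bounded_measurable_bound[OF f] M0) auto
  qed
  also have "\<dots> = (M * (b - a)) ^ length (i # w) / fact (length (i # w))"
    using integral_unique[OF antiderivative] by (simp add: n_def)
  finally show ?case .
qed

lemma abs_iter_int_le_Icc:
  assumes f: "bounded_measurable M f" and "a \<in> {0..T}" "b \<in> {0..T}"
  shows "\<bar>iter_int f a b w\<bar> \<le> (M * T) ^ length w / fact (length w)"
proof (cases "a \<le> b")
  case True
  have M0: "0 \<le> M" using bounded_measurable_nonneg[OF f] .
  have "\<bar>iter_int f a b w\<bar> \<le> (M * (b - a)) ^ length w / fact (length w)"
    by (rule abs_iter_int_le[OF f True])
  also have "\<dots> \<le> (M * T) ^ length w / fact (length w)"
    using assms M0 True by (intro divide_right_mono power_mono mult_left_mono) auto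
  finally show ?thesis .
next
  case False
  then show ?thesis
    using iter_int_empty_interval[of b a f w] assms bounded_measurable_nonneg[OF f] by auto
qed

lemma abs_iter_int_le_power:
  assumes f: "bounded_measurable M f" and "a \<in> {0..T}" "b \<in> {0..T}" "M * T \<le> C"
  shows "\<bar>iter_int f a b w\<bar> \<le> C ^ length w"
proof -
  have MT: "0 \<le> M * T" using bounded_measurable_nonneg[OF f] assms(2) by simp
  have "\<bar>iter_int f a b w\<bar> \<le> (M * T) ^ length w / fact (length w)"
    by (rule abs_iter_int_le_Icc[OF assms(1-3)])
  also have "\<dots> \<le> (M * T) ^ length w"
    using MT by (simp add: divide_le_eq fact_ge_1 mult_le_cancel_left1 zero_le_power)
  also have "\<dots> \<le> C ^ length w"
    using MT assms(4) by (intro power_mono) auto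
  finally show ?thesis .
qed

section \<open>First variation of iterated integrals\<close>

lemma bounded_measurable_diff:
  assumes x: "bounded_measurable M x" and h: "bounded_measurable M' h"
  shows "bounded_measurable (M + M') (\<lambda>s. h s - x s)"
  unfolding bounded_measurable_def
proof (intro conjI allI)
  show "(\<lambda>t. (h t - x t) $ i) \<in> borel_measurable borel" for i
    using x h by simp
  fix t i
  have "\<bar>h t $ i - x t $ i\<bar> \<le> \<bar>h t $ i\<bar> + \<bar>x t $ i\<bar>"
    by (rule abs_triangle_ineq4)
  then show "\<bar>(h t - x t) $ i\<bar> \<le> M + M'"
    using bounded_measurable_bound[OF x, of t i] bounded_measurable_bound[OF h, of t i] by simp
qed

definition iter_int_subst ::
    "(real \<Rightarrow> real^'d) \<Rightarrow> (real \<Rightarrow> real^'d) \<Rightarrow> (real \<Rightarrow> real^'d) \<Rightarrow> real \<Rightarrow> real \<Rightarrow> 'd list \<Rightarrow> nat \<Rightarrow> real"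
  where "iter_int_subst x g h a b w k =
    integral {a..b} (\<lambda>s. iter_int x a s (take k w) * g s $ (w ! k) * iter_int h s b (drop (Suc k) w))"

lemma iter_int_subst_Cons:
  fixes x g h :: "real \<Rightarrow> real^'d"
  assumes x: "bounded_measurable M x" and g: "bounded_measurable M' g" and h: "bounded_measurable M'' h"
  shows "(\<lambda>r. x r $ i * iter_int_subst x g h r b w k) integrable_on {a..b}"
    and "integral {a..b} (\<lambda>r. x r $ i * iter_int_subst x g h r b w k) = iter_int_subst x g h a b (i # w) (Suc k)"
proof -
  define v where "v = drop (Suc k) w"
  obtain B where B: "\<And>r s. r \<in> {a..b} \<Longrightarrow> s \<in> {a..b} \<Longrightarrow> \<bar>iter_int h r s v\<bar> \<le> B"
    using bounded_on_square[OF continuous_on_iter_int[OF h], where a=a and b=b] by blast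
  have \<psi>: "\<bar>g s $ (w ! k) * iter_int h s b v\<bar> \<le> M' * B" if "s \<in> {a..b}" for s
    unfolding abs_mult using that B[of s b] bounded_measurable_nonneg[OF g]
    by (intro mult_mono bounded_measurable_bound[OF g]) auto
  have swap: "(\<lambda>r. x r $ i * integral {r..b} (\<lambda>s. iter_int x r s (take k w) * (g s $ (w ! k) * iter_int h s b v)))
      integrable_on {a..b}"
    "integral {a..b} (\<lambda>r. x r $ i * integral {r..b} (\<lambda>s. iter_int x r s (take k w) * (g s $ (w ! k) * iter_int h s b v)))
      = integral {a..b} (\<lambda>s. integral {a..s} (\<lambda>r. x r $ i * iter_int x r s (take k w)) * (g s $ (w ! k) * iter_int h s b v))"
    using g h x \<psi> by (auto intro!: integral_swap_triangle[where B="M' * B"] bounded_measurable_bound continuous_on_iter_int)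
  have expand: "x r $ i * iter_int_subst x g h r b w k
      = x r $ i * integral {r..b} (\<lambda>s. iter_int x r s (take k w) * (g s $ (w ! k) * iter_int h s b v))" for r
    by (simp add: iter_int_subst_def v_def mult.assoc)
  show "(\<lambda>r. x r $ i * iter_int_subst x g h r b w k) integrable_on {a..b}"
    unfolding expand by (rule swap(1))
  show "integral {a..b} (\<lambda>r. x r $ i * iter_int_subst x g h r b w k) = iter_int_subst x g h a b (i # w) (Suc k)"
    unfolding expand swap(2) by (simp add: iter_int_subst_def v_def mult.assoc)
qed

text \<open>Duhamel's formula: the difference of two iterated integrals telescopes over the letters.\<close>
lemma iter_int_diff:
  fixes x h :: "real \<Rightarrow> real^'d"
  assumes x: "bounded_measurable M x" and h: "bounded_measurable M' h"
  shows "iter_int h a b w - iter_int x a b w = (\<Sum>k<length w. iter_int_subst x (\<lambda>s. h s - x s) h a b w k)"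
proof (induction w arbitrary: a)
  case Nil
  then show ?case by simp
next
  case (Cons i w)
  define g where "g s = h s - x s" for s
  have g: "bounded_measurable (M + M') g"
    unfolding g_def by (rule bounded_measurable_diff[OF x h])
  have int_h: "(\<lambda>r. f r $ i * iter_int h r b w) integrable_on {a..b}"
    if "bounded_measurable N f" for f :: "real \<Rightarrow> real^'d" and N
    using integrable_on_iter_int_mult[OF x that h, of a "[]" i b w] by simp
  have int_x: "(\<lambda>r. x r $ i * iter_int x r b w) integrable_on {a..b}"
    using integrable_on_iter_int_mult[OF x x x, of a "[]" i b w] by simp
  have int_diff: "(\<lambda>r. x r $ i * (iter_int h r b w - iter_int x r b w)) integrable_on {a..b}"
    using integrable_on_iter_int_mult_diff[OF x x h, of a "[]" i b w 1] by simp
  have "iter_int h a b (i # w) - iter_int x a b (i # w)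
      = integral {a..b} (\<lambda>r. x r $ i * (iter_int h r b w - iter_int x r b w) + g r $ i * iter_int h r b w)"
    using int_h[OF h] int_x by (simp add: integral_diff[symmetric] g_def algebra_simps)
  also have "\<dots> = integral {a..b} (\<lambda>r. x r $ i * (iter_int h r b w - iter_int x r b w))
      + integral {a..b} (\<lambda>r. g r $ i * iter_int h r b w)"
    by (rule integral_add[OF int_diff int_h[OF g]])
  also have "integral {a..b} (\<lambda>r. x r $ i * (iter_int h r b w - iter_int x r b w))
      = (\<Sum>k<length w. integral {a..b} (\<lambda>r. x r $ i * iter_int_subst x g h r b w k))"
    unfolding Cons.IH g_def[symmetric] sum_distrib_left
    by (rule integral_sum) (auto intro: iter_int_subst_Cons(1)[OF x g h])
  also have "\<dots> = (\<Sum>k<length w. iter_int_subst x g h a b (i # w) (Suc k))"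
    by (simp add: iter_int_subst_Cons(2)[OF x g h])
  also have "integral {a..b} (\<lambda>r. g r $ i * iter_int h r b w) = iter_int_subst x g h a b (i # w) 0"
    by (simp add: iter_int_subst_def)
  finally show ?case
    by (simp add: g_def[symmetric] sum.lessThan_Suc_shift del: sum.lessThan_Suc)
qed

lemma iter_int_subst_scaleR:
  "iter_int_subst x (\<lambda>s. e *\<^sub>R g s) h a b w k = e * iter_int_subst x g h a b w k"
  by (simp add: iter_int_subst_def mult_ac)

lemma abs_iter_int_subst_le:
  fixes x g h :: "real \<Rightarrow> real^'d"
  assumes x: "bounded_measurable M x" and g: "bounded_measurable M' g" and h: "bounded_measurable M'' h"
    and ab: "a \<in> {0..T}" "b \<in> {0..T}" and k: "k < length w"
    and C: "M * T \<le> C" "M' * T \<le> C" "M'' * T \<le> C"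
  shows "\<bar>iter_int_subst x g h a b w k\<bar> \<le> C ^ length w"
proof -
  have M'0: "0 \<le> M'" using bounded_measurable_nonneg[OF g] .
  have C0: "0 \<le> C" using C(2) M'0 ab(1) by (meson atLeastAtMost_iff mult_nonneg_nonneg order_trans)
  have "\<bar>iter_int_subst x g h a b w k\<bar> \<le> (C ^ k * M' * C ^ (length w - Suc k)) * T"
    unfolding iter_int_subst_def
  proof (rule abs_integral_Icc_le[OF integrable_on_iter_int_mult[OF x g h] ab])
    fix s assume "s \<in> {a..b}"
    then have s: "s \<in> {0..T}" using ab by auto
    have "\<bar>iter_int x a s (take k w)\<bar> \<le> C ^ k"
      using abs_iter_int_le_power[OF x ab(1) s C(1), of "take k w"] k by simp
    moreover have "\<bar>iter_int h s b (drop (Suc k) w)\<bar> \<le> C ^ (length w - Suc k)"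
      using abs_iter_int_le_power[OF h s ab(2) C(3), of "drop (Suc k) w"] by simp
    ultimately show "\<bar>iter_int x a s (take k w) * g s $ (w ! k) * iter_int h s b (drop (Suc k) w)\<bar>
        \<le> C ^ k * M' * C ^ (length w - Suc k)"
      unfolding abs_mult using bounded_measurable_bound[OF g] C0 M'0 by (intro mult_mono) auto
  qed (use C0 M'0 in auto)
  also have "\<dots> = C ^ k * (M' * T) * C ^ (length w - Suc k)"
    by (simp add: ac_simps)
  also have "\<dots> \<le> C ^ k * C * C ^ (length w - Suc k)"
    using C(2) C0 by (intro mult_right_mono mult_left_mono) simp_all
  also have "\<dots> = C ^ (Suc k + (length w - Suc k))"
    by (simp add: power_add)
  also have "\<dots> = C ^ length w"
    using k by (metis Suc_leI le_add_diff_inverse)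
  finally show ?thesis .
qed

lemma abs_sum_lessThan_le:
  fixes F :: "nat \<Rightarrow> real"
  assumes "\<And>k. k < n \<Longrightarrow> \<bar>F k\<bar> \<le> B"
  shows "\<bar>\<Sum>k<n. F k\<bar> \<le> real n * B"
  using order_trans[OF sum_abs sum_bounded_above[of "{..<n}" "\<lambda>k. \<bar>F k\<bar>" B]] assms by simp

lemma iter_int_perturb:
  fixes x g :: "real \<Rightarrow> real^'d"
  assumes x: "bounded_measurable M x" and g: "bounded_measurable M g" and e: "\<bar>e\<bar> \<le> 1"
  shows "iter_int (\<lambda>s. x s + e *\<^sub>R g s) a b w - iter_int x a b w
       = e * (\<Sum>k<length w. iter_int_subst x g (\<lambda>s. x s + e *\<^sub>R g s) a b w k)"
  using iter_int_diff[OF x bounded_measurable_add_scaleR[OF x g e]]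
  by (simp add: iter_int_subst_scaleR sum_distrib_left)

lemma abs_iter_int_perturb_le:
  fixes x g :: "real \<Rightarrow> real^'d"
  assumes x: "bounded_measurable M x" and g: "bounded_measurable M g" and e: "\<bar>e\<bar> \<le> 1"
    and ab: "a \<in> {0..T}" "b \<in> {0..T}"
  shows "\<bar>iter_int (\<lambda>s. x s + e *\<^sub>R g s) a b w - iter_int x a b w\<bar>
       \<le> \<bar>e\<bar> * (real (length w) * (2 * M * T) ^ length w)"
proof -
  have MT: "0 \<le> M * T" using bounded_measurable_nonneg[OF x] ab(1) by simp
  have "\<bar>\<Sum>k<length w. iter_int_subst x g (\<lambda>s. x s + e *\<^sub>R g s) a b w k\<bar> \<le> real (length w) * (2 * M * T) ^ length w"
    using MT by (intro abs_sum_lessThan_le abs_iter_int_subst_le[OF x g bounded_measurable_add_scaleR[OF x g e] ab])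
      simp_all
  then show ?thesis
    unfolding iter_int_perturb[OF x g e] abs_mult by (intro mult_left_mono) auto
qed

definition iter_int_deriv ::
    "(real \<Rightarrow> real^'d) \<Rightarrow> (real \<Rightarrow> real^'d) \<Rightarrow> real \<Rightarrow> real \<Rightarrow> 'd list \<Rightarrow> real"
  where "iter_int_deriv x g a b w = (\<Sum>k<length w. iter_int_subst x g x a b w k)"

lemma abs_iter_int_deriv_le:
  fixes x g :: "real \<Rightarrow> real^'d"
  assumes x: "bounded_measurable M x" and g: "bounded_measurable M g"
    and ab: "a \<in> {0..T}" "b \<in> {0..T}" and C: "M * T \<le> C"
  shows "\<bar>iter_int_deriv x g a b w\<bar> \<le> real (length w) * C ^ length w"
  unfolding iter_int_deriv_def
  by (intro abs_sum_lessThan_le abs_iter_int_subst_le[OF x g x ab]) (use C in simp_all)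

lemma abs_iter_int_subst_perturb_le:
  fixes x g :: "real \<Rightarrow> real^'d"
  assumes x: "bounded_measurable M x" and g: "bounded_measurable M g" and e: "\<bar>e\<bar> \<le> 1"
    and ab: "a \<in> {0..T}" "b \<in> {0..T}" and k: "k < length w"
  shows "\<bar>iter_int_subst x g (\<lambda>s. x s + e *\<^sub>R g s) a b w k - iter_int_subst x g x a b w k\<bar>
     \<le> \<bar>e\<bar> * real (length w) * (2 * M * T) ^ length w"
proof -
  define C where "C = 2 * M * T"
  define n where "n = length w"
  define h where "h = (\<lambda>s. x s + e *\<^sub>R g s)"
  have h: "bounded_measurable (2 * M) h"
    unfolding h_def by (rule bounded_measurable_add_scaleR[OF x g e])
  have M0: "0 \<le> M" using bounded_measurable_nonneg[OF x] .
  have C0: "0 \<le> C" and MC: "M * T \<le> C"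
    unfolding C_def using M0 ab(1) by (simp_all add: mult_right_mono)
  have "\<bar>iter_int_subst x g h a b w k - iter_int_subst x g x a b w k\<bar>
      = \<bar>integral {a..b} (\<lambda>s. iter_int x a s (take k w) * g s $ (w ! k)
          * (iter_int h s b (drop (Suc k) w) - 1 * iter_int x s b (drop (Suc k) w)))\<bar>"
    unfolding iter_int_subst_def
    by (subst integral_diff[OF integrable_on_iter_int_mult[OF x g h] integrable_on_iter_int_mult[OF x g x], symmetric])
       (simp add: algebra_simps)
  also have "\<dots> \<le> (C ^ k * M * (\<bar>e\<bar> * (real n * C ^ (n - Suc k)))) * T"
  proof (rule abs_integral_Icc_le[OF integrable_on_iter_int_mult_diff[OF x g h] ab])
    fix s assume "s \<in> {a..b}"
    then have s: "s \<in> {0..T}" using ab by auto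
    have "\<bar>iter_int x a s (take k w)\<bar> \<le> C ^ k"
      using abs_iter_int_le_power[OF x ab(1) s MC, of "take k w"] k by (simp add: n_def)
    moreover have "\<bar>iter_int h s b (drop (Suc k) w) - 1 * iter_int x s b (drop (Suc k) w)\<bar>
        \<le> \<bar>e\<bar> * (real n * C ^ (n - Suc k))"
    proof -
      have "\<bar>iter_int h s b (drop (Suc k) w) - iter_int x s b (drop (Suc k) w)\<bar>
          \<le> \<bar>e\<bar> * (real (n - Suc k) * C ^ (n - Suc k))"
        using abs_iter_int_perturb_le[OF x g e s ab(2), of "drop (Suc k) w"]
        by (simp add: h_def C_def n_def)
      also have "\<dots> \<le> \<bar>e\<bar> * (real n * C ^ (n - Suc k))"
        using C0 by (intro mult_left_mono mult_right_mono) simp_all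
      finally show ?thesis by simp
    qed
    ultimately show "\<bar>iter_int x a s (take k w) * g s $ (w ! k)
        * (iter_int h s b (drop (Suc k) w) - 1 * iter_int x s b (drop (Suc k) w))\<bar>
        \<le> C ^ k * M * (\<bar>e\<bar> * (real n * C ^ (n - Suc k)))"
      unfolding abs_mult using bounded_measurable_bound[OF g] C0 M0 by (intro mult_mono) auto
  qed (use C0 M0 in auto)
  also have "\<dots> = \<bar>e\<bar> * real n * (C ^ k * (M * T) * C ^ (n - Suc k))"
    by (simp add: ac_simps)
  also have "\<dots> \<le> \<bar>e\<bar> * real n * (C ^ k * C * C ^ (n - Suc k))"
    using MC C0 by (intro mult_left_mono mult_right_mono) simp_all
  also have "C ^ k * C * C ^ (n - Suc k) = C ^ (Suc k + (n - Suc k))"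
    by (simp add: power_add)
  also have "\<dots> = C ^ n"
    using k unfolding n_def by (metis Suc_leI le_add_diff_inverse)
  finally show ?thesis
    unfolding h_def C_def n_def .
qed

lemma iter_int_second_order:
  fixes x g :: "real \<Rightarrow> real^'d"
  assumes x: "bounded_measurable M x" and g: "bounded_measurable M g" and e: "\<bar>e\<bar> \<le> 1"
    and ab: "a \<in> {0..T}" "b \<in> {0..T}"
  shows "\<bar>iter_int (\<lambda>s. x s + e *\<^sub>R g s) a b w - iter_int x a b w - e * iter_int_deriv x g a b w\<bar>
     \<le> e\<^sup>2 * (real (length w) ^ 2 * (2 * M * T) ^ length w)"
proof -
  define h where "h = (\<lambda>s. x s + e *\<^sub>R g s)"
  define n where "n = length w"
  have "iter_int h a b w - iter_int x a b w - e * iter_int_deriv x g a b w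
      = e * (\<Sum>k<n. iter_int_subst x g h a b w k - iter_int_subst x g x a b w k)"
    unfolding iter_int_perturb[OF x g e, folded h_def] iter_int_deriv_def n_def
    by (simp add: sum_subtractf algebra_simps)
  also have "\<bar>\<dots>\<bar> \<le> \<bar>e\<bar> * (real n * (\<bar>e\<bar> * real n * (2 * M * T) ^ n))"
    unfolding abs_mult h_def n_def
    by (intro mult_left_mono abs_sum_lessThan_le abs_iter_int_subst_perturb_le[OF x g e ab]) auto
  also have "\<dots> = e\<^sup>2 * (real n ^ 2 * (2 * M * T) ^ n)"
    by (simp add: power2_eq_square algebra_simps)
  finally show ?thesis
    unfolding h_def n_def .
qed

section \<open>Derivative of the kernel\<close>

lemma has_real_derivative_at_0_quadratic:
  fixes F :: "real \<Rightarrow> real"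
  assumes "\<And>e. \<bar>e\<bar> \<le> 1 \<Longrightarrow> \<bar>F e - F 0 - e * D\<bar> \<le> e\<^sup>2 * R"
  shows "(F has_real_derivative D) (at 0)"
  unfolding has_field_derivative_iff
proof (subst LIM_zero_iff[symmetric], rule Lim_null_comparison)
  have "((\<lambda>e. \<bar>e\<bar> * R) \<longlongrightarrow> \<bar>0\<bar> * R) (at 0)"
    by (intro tendsto_intros)
  then show "((\<lambda>e. \<bar>e\<bar> * R) \<longlongrightarrow> 0) (at 0)" by simp
  show "\<forall>\<^sub>F e in at 0. norm ((F e - F 0) / (e - 0) - D) \<le> \<bar>e\<bar> * R"
    unfolding eventually_at
  proof (intro exI[of _ 1] conjI ballI impI)
    fix e :: real assume "e \<noteq> 0 \<and> dist e 0 < 1"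
    then have e0: "e \<noteq> 0" and e1: "\<bar>e\<bar> \<le> 1" by (auto simp: dist_real_def)
    have "(F e - F 0) / e - D = (F e - F 0 - e * D) / e"
      using e0 by (simp add: field_simps)
    then have "\<bar>(F e - F 0) / e - D\<bar> = \<bar>F e - F 0 - e * D\<bar> / \<bar>e\<bar>"
      by (simp add: abs_divide)
    also have "\<dots> \<le> e\<^sup>2 * R / \<bar>e\<bar>"
      using assms[OF e1] by (simp add: divide_right_mono)
    also have "\<dots> = \<bar>e\<bar> * \<bar>e\<bar> * R / \<bar>e\<bar>"
      by (simp add: power2_eq_square)
    also have "\<dots> = \<bar>e\<bar> * R"
      using e0 by (simp del: abs_mult_self_eq)
    finally show "norm ((F e - F 0) / (e - 0) - D) \<le> \<bar>e\<bar> * R" by simp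
  qed simp
qed

lemma has_real_derivative_suminf_quadratic:
  fixes a :: "real \<Rightarrow> nat \<Rightarrow> real"
  assumes a: "\<And>e. \<bar>e\<bar> \<le> 1 \<Longrightarrow> summable (a e)" and D: "summable D" and R: "summable R"
    and bound: "\<And>e j. \<bar>e\<bar> \<le> 1 \<Longrightarrow> \<bar>a e j - a 0 j - e * D j\<bar> \<le> e\<^sup>2 * R j"
  shows "((\<lambda>e. suminf (a e)) has_real_derivative suminf D) (at 0)"
proof (rule has_real_derivative_at_0_quadratic)
  fix e :: real assume e: "\<bar>e\<bar> \<le> 1"
  have a0: "summable (a 0)" using a[of 0] by simp
  have "suminf (a e) - suminf (a 0) - e * suminf D = (\<Sum>j. a e j - a 0 j - e * D j)"
    using suminf_diff[OF summable_diff[OF a[OF e] a0] summable_mult[OF D]]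
      suminf_diff[OF a[OF e] a0] suminf_mult[OF D] by simp
  also have "\<bar>\<dots>\<bar> \<le> (\<Sum>j. e\<^sup>2 * R j)"
    using norm_suminf_le[of "\<lambda>j. a e j - a 0 j - e * D j" "\<lambda>j. e\<^sup>2 * R j"] bound[OF e]
      summable_mult[OF R] by simp
  also have "\<dots> = e\<^sup>2 * suminf R"
    by (rule suminf_mult[OF R])
  finally show "\<bar>suminf (a e) - suminf (a 0) - e * suminf D\<bar> \<le> e\<^sup>2 * suminf R" .
qed

lemma summable_exp_bound:
  fixes F :: "nat \<Rightarrow> real"
  assumes "\<And>j. \<bar>F j\<bar> \<le> K * (L ^ j / fact j)"
  shows "summable F"
proof (rule summable_comparison_test)
  show "\<exists>N. \<forall>n\<ge>N. norm (F n) \<le> K * (L ^ n / fact n)" using assms by auto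
  show "summable (\<lambda>n. K * (L ^ n / fact n))"
    using summable_mult[OF summable_exp[of L], of K] by (simp add: field_simps)
qed

lemma summable_square_exp_bound:
  fixes F :: "nat \<Rightarrow> real"
  assumes F: "\<And>j. \<bar>F j\<bar> \<le> K * (real j ^ 2 * (L ^ j / fact j))" and "0 \<le> K" "0 \<le> L"
  shows "summable F"
proof (rule summable_exp_bound[where K=K and L="4 * L"])
  fix j
  have "real j \<le> 2 ^ j"
    using less_exp[of j] by (simp add: less_imp_le)
  then have "real j ^ 2 \<le> 2 ^ j * 2 ^ j"
    by (simp add: power2_eq_square mult_mono)
  also have "(2::real) ^ j * 2 ^ j = 4 ^ j"
    by (simp flip: power_mult_distrib)
  finally have "K * (real j ^ 2 * (L ^ j / fact j)) \<le> K * (4 ^ j * (L ^ j / fact j))"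
    using assms(2,3) by (intro mult_left_mono mult_right_mono) simp_all
  then show "\<bar>F j\<bar> \<le> K * ((4 * L) ^ j / fact j)"
    using F[of j] by (simp add: power_mult_distrib)
qed

definition iter_kernel ::
    "(real \<Rightarrow> real^'d) \<Rightarrow> real \<Rightarrow> real \<Rightarrow> (real \<Rightarrow> real^'d) \<Rightarrow> real \<Rightarrow> real \<Rightarrow> real"
  where "iter_kernel f a b g c e = (\<Sum>j. \<Sum>w\<in>{w::'d list. length w = j}. iter_int f a b w * iter_int g c e w)"

lemma sigker_eq_iter_kernel: "sigker Z a b W c e = iter_kernel (dot Z) a b (dot W) c e"
  unfolding sigker_def iter_kernel_def sig_eq_iter_int ..

lemma finite_words: "finite {w :: 'd::finite list. length w = j}"
  using finite_lists_length_eq[of "UNIV :: 'd set" j] by simp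

lemma abs_sum_words_le:
  fixes G :: "'d::finite list \<Rightarrow> real"
  assumes "\<And>w. length w = j \<Longrightarrow> \<bar>G w\<bar> \<le> B"
  shows "\<bar>\<Sum>w\<in>{w :: 'd list. length w = j}. G w\<bar> \<le> real CARD('d) ^ j * B"
proof -
  have "\<bar>\<Sum>w\<in>{w :: 'd list. length w = j}. G w\<bar> \<le> real (card {w :: 'd list. length w = j}) * B"
    by (rule order_trans[OF sum_abs sum_bounded_above]) (use assms in auto)
  then show ?thesis
    using card_lists_length_eq[of "UNIV :: 'd set" j] by simp
qed

lemma abs_sum_words_iter_int_le:
  fixes G :: "'d::finite list \<Rightarrow> real" and y :: "real \<Rightarrow> real^'d"
  assumes y: "bounded_measurable M y" and T: "0 \<le> T"
    and G: "\<And>w. length w = j \<Longrightarrow> \<bar>G w\<bar> \<le> K * C ^ j" and "0 \<le> K" "0 \<le> C"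
  shows "\<bar>\<Sum>w\<in>{w::'d list. length w = j}. G w * iter_int y 0 T w\<bar>
     \<le> K * ((real CARD('d) * C * (M * T)) ^ j / fact j)"
proof -
  have "\<bar>\<Sum>w\<in>{w::'d list. length w = j}. G w * iter_int y 0 T w\<bar>
      \<le> real CARD('d) ^ j * ((K * C ^ j) * ((M * T) ^ j / fact j))"
  proof (rule abs_sum_words_le)
    fix w :: "'d list" assume w: "length w = j"
    show "\<bar>G w * iter_int y 0 T w\<bar> \<le> K * C ^ j * ((M * T) ^ j / fact j)"
      unfolding abs_mult using G[OF w] abs_iter_int_le_Icc[OF y, where a=0 and b=T and T=T and w=w] w T assms(4,5)
      by (intro mult_mono) auto
  qed
  then show ?thesis by (simp add: power_mult_distrib ac_simps)
qed

lemma has_real_derivative_iter_kernel_series: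
  fixes x g y :: "real \<Rightarrow> real^'d"
  assumes x: "bounded_measurable M x" and g: "bounded_measurable M g" and y: "bounded_measurable M y"
    and T: "0 \<le> T"
  shows "((\<lambda>e. iter_kernel (\<lambda>s. x s + e *\<^sub>R g s) 0 T y 0 T) has_real_derivative
           (\<Sum>j. \<Sum>w\<in>{w::'d list. length w = j}. iter_int_deriv x g 0 T w * iter_int y 0 T w)) (at 0)"
  unfolding iter_kernel_def
proof (rule has_real_derivative_suminf_quadratic)
  define C where "C = 2 * M * T"
  define L where "L = real CARD('d) * C * (M * T)"
  have M0: "0 \<le> M" using bounded_measurable_nonneg[OF x] .
  have C0: "0 \<le> C" and MC: "M * T \<le> C" and L0: "0 \<le> L"
    unfolding C_def L_def using M0 T by (simp_all add: mult_right_mono)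
  have ab: "0 \<in> {0..T}" "T \<in> {0..T}" using T by auto
  have words_le: "\<bar>\<Sum>w\<in>{w::'d list. length w = j}. G w * iter_int y 0 T w\<bar> \<le> K * (L ^ j / fact j)"
    if "\<And>w. length w = j \<Longrightarrow> \<bar>G w\<bar> \<le> K * C ^ j" "0 \<le> K" for G K j
    unfolding L_def using abs_sum_words_iter_int_le[OF y T that C0] .
  show "summable (\<lambda>j. \<Sum>w\<in>{w::'d list. length w = j}. iter_int (\<lambda>s. x s + e *\<^sub>R g s) 0 T w * iter_int y 0 T w)"
    if e: "\<bar>e\<bar> \<le> 1" for e
  proof (rule summable_exp_bound[where K=1 and L=L])
    fix j
    show "\<bar>\<Sum>w\<in>{w::'d list. length w = j}. iter_int (\<lambda>s. x s + e *\<^sub>R g s) 0 T w * iter_int y 0 T w\<bar>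
        \<le> 1 * (L ^ j / fact j)"
    proof (rule words_le)
      fix w :: "'d list" assume "length w = j"
      then show "\<bar>iter_int (\<lambda>s. x s + e *\<^sub>R g s) 0 T w\<bar> \<le> 1 * C ^ j"
        using abs_iter_int_le_power[OF bounded_measurable_add_scaleR[OF x g e] ab order_refl, of w]
        by (simp add: C_def)
    qed simp
  qed
  have deriv_le: "\<bar>\<Sum>w\<in>{w::'d list. length w = j}. iter_int_deriv x g 0 T w * iter_int y 0 T w\<bar>
      \<le> real j ^ 2 * (L ^ j / fact j)" for j
  proof (rule words_le)
    fix w :: "'d list" assume "length w = j"
    moreover have "real j \<le> real j ^ 2"
      by (cases j) (auto simp: power2_eq_square)
    ultimately show "\<bar>iter_int_deriv x g 0 T w\<bar> \<le> real j ^ 2 * C ^ j"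
      using abs_iter_int_deriv_le[OF x g ab MC, of w] C0 order_trans[OF _ mult_right_mono] by fastforce
  qed simp
  then show "summable (\<lambda>j. \<Sum>w\<in>{w::'d list. length w = j}. iter_int_deriv x g 0 T w * iter_int y 0 T w)"
    using L0 by (intro summable_square_exp_bound[where K=1]) auto
  show "summable (\<lambda>j. real j ^ 2 * (L ^ j / fact j))"
    using L0 by (intro summable_square_exp_bound[where K=1]) auto
  show "\<bar>(\<Sum>w\<in>{w::'d list. length w = j}. iter_int (\<lambda>s. x s + e *\<^sub>R g s) 0 T w * iter_int y 0 T w)
      - (\<Sum>w\<in>{w::'d list. length w = j}. iter_int (\<lambda>s. x s + 0 *\<^sub>R g s) 0 T w * iter_int y 0 T w)
      - e * (\<Sum>w\<in>{w::'d list. length w = j}. iter_int_deriv x g 0 T w * iter_int y 0 T w)\<bar>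
      \<le> e\<^sup>2 * (real j ^ 2 * (L ^ j / fact j))"
    if e: "\<bar>e\<bar> \<le> 1" for e j
  proof -
    have "\<bar>\<Sum>w\<in>{w::'d list. length w = j}. (iter_int (\<lambda>s. x s + e *\<^sub>R g s) 0 T w - iter_int x 0 T w
        - e * iter_int_deriv x g 0 T w) * iter_int y 0 T w\<bar> \<le> (e\<^sup>2 * real j ^ 2) * (L ^ j / fact j)"
    proof (rule words_le)
      fix w :: "'d list" assume "length w = j"
      then show "\<bar>iter_int (\<lambda>s. x s + e *\<^sub>R g s) 0 T w - iter_int x 0 T w - e * iter_int_deriv x g 0 T w\<bar>
          \<le> e\<^sup>2 * real j ^ 2 * C ^ j"
        using iter_int_second_order[OF x g e ab, of w] by (simp add: C_def mult.assoc)
    qed simp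
    moreover have "(\<Sum>w\<in>{w::'d list. length w = j}. iter_int (\<lambda>s. x s + e *\<^sub>R g s) 0 T w * iter_int y 0 T w)
        - (\<Sum>w\<in>{w::'d list. length w = j}. iter_int (\<lambda>s. x s + 0 *\<^sub>R g s) 0 T w * iter_int y 0 T w)
        - e * (\<Sum>w\<in>{w::'d list. length w = j}. iter_int_deriv x g 0 T w * iter_int y 0 T w)
      = (\<Sum>w\<in>{w::'d list. length w = j}. (iter_int (\<lambda>s. x s + e *\<^sub>R g s) 0 T w - iter_int x 0 T w
        - e * iter_int_deriv x g 0 T w) * iter_int y 0 T w)"
      by (simp add: sum_subtractf sum_distrib_left left_diff_distrib mult.assoc)
    ultimately show ?thesis
      by (simp add: mult.assoc)
  qed
qed

lemma sum_words_split:
  fixes F :: "'d::finite list \<Rightarrow> 'd \<Rightarrow> 'd list \<Rightarrow> real"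
  shows "(\<Sum>w\<in>{w. length w = Suc n}. \<Sum>k<Suc n. F (take k w) (w ! k) (drop (Suc k) w))
       = (\<Sum>p\<le>n. \<Sum>u\<in>{u. length u = p}. \<Sum>v\<in>{v. length v = n - p}. \<Sum>i\<in>UNIV. F u i v)"
proof -
  have split_at: "(\<Sum>w\<in>{w. length w = Suc n}. F (take p w) (w ! p) (drop (Suc p) w))
      = (\<Sum>u\<in>{u. length u = p}. \<Sum>v\<in>{v. length v = n - p}. \<Sum>i\<in>UNIV. F u i v)" if p: "p \<le> n" for p
  proof -
    have "(\<Sum>w\<in>{w. length w = Suc n}. F (take p w) (w ! p) (drop (Suc p) w))
        = (\<Sum>(u, v, i)\<in>{u. length u = p} \<times> {v. length v = n - p} \<times> UNIV. F u i v)"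
    proof (rule sum.reindex_bij_witness[where i="\<lambda>(u, v, i). u @ i # v"
          and j="\<lambda>w. (take p w, drop (Suc p) w, w ! p)"])
      fix w :: "'d list" assume "w \<in> {w. length w = Suc n}"
      then show "(case (take p w, drop (Suc p) w, w ! p) of (u, v, i) \<Rightarrow> u @ i # v) = w"
        using p id_take_nth_drop[of p w] by simp
    qed (use p in auto)
    then show ?thesis
      by (simp add: sum.cartesian_product)
  qed
  have "(\<Sum>w\<in>{w. length w = Suc n}. \<Sum>k<Suc n. F (take k w) (w ! k) (drop (Suc k) w))
      = (\<Sum>p\<le>n. \<Sum>w\<in>{w. length w = Suc n}. F (take p w) (w ! p) (drop (Suc p) w))"
    by (subst sum.swap) (simp only: lessThan_Suc_atMost)
  then show ?thesis
    by (simp add: split_at)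
qed

lemma integral_suminf_bounded:
  fixes f :: "nat \<Rightarrow> real \<Rightarrow> real"
  assumes int: "\<And>n. f n integrable_on {a..b}" and bnd: "\<And>n x. x \<in> {a..b} \<Longrightarrow> \<bar>f n x\<bar> \<le> B n"
    and B: "summable B"
  shows "(\<lambda>n. integral {a..b} (f n)) sums integral {a..b} (\<lambda>x. \<Sum>n. f n x)"
proof -
  have "(\<lambda>k. integral {a..b} (\<lambda>x. \<Sum>n<k. f n x)) \<longlonglongrightarrow> integral {a..b} (\<lambda>x. \<Sum>n. f n x)"
  proof (rule dominated_convergence(2)[where h="\<lambda>_. suminf B"])
    show "(\<lambda>x. \<Sum>n<k. f n x) integrable_on {a..b}" for k
      using int by (intro integrable_sum) auto
    show "norm (\<Sum>n<k. f n x) \<le> suminf B" if x: "x \<in> {a..b}" for k x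
    proof -
      have "norm (\<Sum>n<k. f n x) \<le> (\<Sum>n<k. B n)"
        unfolding real_norm_def by (rule order_trans[OF sum_abs sum_mono]) (use bnd x in auto)
      also have "\<dots> \<le> suminf B"
        using bnd[OF x] by (intro sum_le_suminf[OF B]) (auto intro: order_trans[OF abs_ge_zero])
      finally show ?thesis .
    qed
    show "(\<lambda>k. \<Sum>n<k. f n x) \<longlonglongrightarrow> (\<Sum>n. f n x)" if "x \<in> {a..b}" for x
      using bnd[OF that] by (intro summable_LIMSEQ summable_comparison_test[OF _ B]) auto
  qed (rule Henstock_Kurzweil_Integration.integrable_const_ivl)
  moreover have "integral {a..b} (\<lambda>x. \<Sum>n<k. f n x) = (\<Sum>n<k. integral {a..b} (f n))" for k
    using int by (intro integral_sum) auto
  ultimately show ?thesis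
    unfolding sums_def by simp
qed

lemma binomial_fact_bound:
  fixes z :: real
  assumes "p \<le> n" "0 \<le> z"
  shows "z ^ p / fact p * (z ^ (n - p) / fact (n - p)) \<le> (2 * z) ^ n / fact n"
proof -
  have "fact p * fact (n - p) * real (n choose p) = fact n"
    using binomial_fact_lemma[OF assms(1)] by (metis of_nat_fact of_nat_mult)
  moreover have "z ^ p * z ^ (n - p) = z ^ n"
    using assms(1) by (simp flip: power_add)
  ultimately have "z ^ p / fact p * (z ^ (n - p) / fact (n - p)) = real (n choose p) * z ^ n / fact n"
    by (simp add: field_simps)
  also have "\<dots> \<le> 2 ^ n * z ^ n / fact n"
    using binomial_le_pow2[of n p] assms(2)
    by (intro divide_right_mono mult_right_mono) (simp_all flip: of_nat_le_iff)
  finally show ?thesis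
    by (simp add: power_mult_distrib)
qed

lemma fact_square_le:
  fixes z :: real
  assumes "0 \<le> z"
  shows "z ^ n / fact n * (z ^ n / fact n) \<le> (z\<^sup>2) ^ n / fact n"
proof -
  have "z ^ n / fact n * (z ^ n / fact n) = (z\<^sup>2) ^ n / (fact n * fact n)"
    by (simp add: power2_eq_square power_mult_distrib)
  also have "\<dots> \<le> (z\<^sup>2) ^ n / fact n"
    using assms by (intro divide_left_mono) (auto simp: fact_ge_1 mult_le_cancel_left1)
  finally show ?thesis .
qed

definition split_integrand :: "(real \<Rightarrow> real^'d) \<Rightarrow> (real \<Rightarrow> real^'d) \<Rightarrow> real \<Rightarrow> 'd list \<Rightarrow> 'd \<Rightarrow> 'd list \<Rightarrow> real \<Rightarrow> real"
  where "split_integrand f g T u i v s = iter_int f 0 s u * g s $ i * iter_int f s T v"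

lemma abs_split_integrand_le:
  assumes f: "bounded_measurable M f" and g: "bounded_measurable M g" and s: "s \<in> {0..T}"
    and uv: "length u = p" "length v = n - p" "p \<le> n"
  shows "\<bar>split_integrand f g T u i v s\<bar> \<le> M * ((2 * (M * T)) ^ n / fact n)"
proof -
  have M0: "0 \<le> M" using bounded_measurable_nonneg[OF f] .
  have ab: "0 \<in> {0..T}" "T \<in> {0..T}" using s by auto
  have MT: "0 \<le> M * T" using M0 s by simp
  have "\<bar>split_integrand f g T u i v s\<bar>
      \<le> (M * T) ^ p / fact p * M * ((M * T) ^ (n - p) / fact (n - p))"
    unfolding split_integrand_def abs_mult
    using abs_iter_int_le_Icc[OF f ab(1) s, of u] abs_iter_int_le_Icc[OF f s ab(2), of v]
      bounded_measurable_bound[OF g] uv M0 MT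
    by (intro mult_mono) auto
  also have "\<dots> = M * ((M * T) ^ p / fact p * ((M * T) ^ (n - p) / fact (n - p)))"
    by simp
  also have "\<dots> \<le> M * ((2 * (M * T)) ^ n / fact n)"
    using M0 s by (intro mult_left_mono binomial_fact_bound uv) auto
  finally show ?thesis .
qed

lemma integrable_on_split_integrand:
  fixes f g :: "real \<Rightarrow> real^'d"
  assumes "bounded_measurable M f" "bounded_measurable M' g"
  shows "split_integrand f g T u i v integrable_on {0..T}"
  unfolding split_integrand_def[abs_def] by (rule integrable_on_iter_int_mult[OF assms(1,2,1)])

text \<open>The part of the integrand \<open>U(s, t) U\<^sub>r\<^sub>e\<^sub>v(T - s, T - t) \<gamma>'(s) \<bullet> Y'(t)\<close> in which the words
  \<open>u\<close> and \<open>v\<close> indexing the two kernels have \<open>n\<close> letters together; \<open>i\<close> is the coordinate of the inner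
  product.\<close>
definition kernel_deriv_density ::
    "(real \<Rightarrow> real^'d) \<Rightarrow> (real \<Rightarrow> real^'d) \<Rightarrow> (real \<Rightarrow> real^'d) \<Rightarrow> real \<Rightarrow> nat \<Rightarrow> real \<Rightarrow> real \<Rightarrow> real"
  where "kernel_deriv_density x g y T n s t =
    (\<Sum>p\<le>n. \<Sum>u\<in>{u::'d list. length u = p}. \<Sum>v\<in>{v::'d list. length v = n - p}. \<Sum>i\<in>UNIV.
       split_integrand x g T u i v s * split_integrand y y T u i v t)"

lemma abs_kernel_deriv_density_le:
  fixes x g y :: "real \<Rightarrow> real^'d"
  assumes x: "bounded_measurable M x" and g: "bounded_measurable M g" and y: "bounded_measurable M y"
    and st: "s \<in> {0..T}" "t \<in> {0..T}"
  shows "\<bar>kernel_deriv_density x g y T n s t\<bar>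
      \<le> real (Suc n) * (real CARD('d) ^ Suc n * (M\<^sup>2 * (((2 * (M * T))\<^sup>2) ^ n / fact n)))"
proof -
  define d where "d = real CARD('d)"
  define K where "K = M\<^sup>2 * (((2 * (M * T))\<^sup>2) ^ n / fact n)"
  have M0: "0 \<le> M" using bounded_measurable_nonneg[OF x] .
  have term_le: "\<bar>split_integrand x g T u i v s * split_integrand y y T u i v t\<bar> \<le> K"
    if "length u = p" "length v = n - p" "p \<le> n" for u i v p
  proof -
    define Z where "Z = (2 * (M * T)) ^ n / fact n"
    have "\<bar>split_integrand x g T u i v s * split_integrand y y T u i v t\<bar> \<le> (M * Z) * (M * Z)"
      unfolding abs_mult Z_def
      using abs_split_integrand_le[OF x g st(1) that] abs_split_integrand_le[OF y y st(2) that] M0 st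
      by (intro mult_mono) auto
    also have "\<dots> = M\<^sup>2 * (Z * Z)"
      by (simp add: power2_eq_square)
    also have "\<dots> \<le> K"
      unfolding K_def Z_def using st M0 by (intro mult_left_mono fact_square_le) auto
    finally show ?thesis .
  qed
  have "\<bar>\<Sum>u\<in>{u::'d list. length u = p}. \<Sum>v\<in>{v::'d list. length v = n - p}. \<Sum>i\<in>UNIV.
      split_integrand x g T u i v s * split_integrand y y T u i v t\<bar> \<le> d ^ Suc n * K" if p: "p \<le> n" for p
  proof -
    have "\<bar>\<Sum>u\<in>{u::'d list. length u = p}. \<Sum>v\<in>{v::'d list. length v = n - p}. \<Sum>i\<in>UNIV.
        split_integrand x g T u i v s * split_integrand y y T u i v t\<bar> \<le> d ^ p * (d ^ (n - p) * (d * K))"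
      unfolding d_def
    proof (intro abs_sum_words_le)
      fix u v :: "'d list" assume "length u = p" "length v = n - p"
      then show "\<bar>\<Sum>i\<in>UNIV. split_integrand x g T u i v s * split_integrand y y T u i v t\<bar> \<le> real CARD('d) * K"
        using term_le p by (intro order_trans[OF sum_abs sum_bounded_above]) auto
    qed
    also have "\<dots> = d ^ (p + (n - p)) * d * K"
      by (simp add: power_add ac_simps)
    also have "\<dots> = d ^ Suc n * K"
      using p by (simp add: ac_simps)
    finally show ?thesis .
  qed
  then have "\<bar>kernel_deriv_density x g y T n s t\<bar> \<le> real (card {..n}) * (d ^ Suc n * K)"
    unfolding kernel_deriv_density_def by (intro order_trans[OF sum_abs sum_bounded_above]) auto
  then show ?thesis
    unfolding d_def K_def by simp
qed

lemma iter_kernel_mult_expansion: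
  fixes x g y :: "real \<Rightarrow> real^'d"
  assumes x: "bounded_measurable M x" and g: "bounded_measurable M g" and y: "bounded_measurable M y"
    and st: "s \<in> {0..T}" "t \<in> {0..T}"
  shows "iter_kernel x 0 s y 0 t * iter_kernel x s T y t T * (g s \<bullet> y t)
       = (\<Sum>n. kernel_deriv_density x g y T n s t)"
proof -
  define Q where "Q = M * T"
  define d where "d = real CARD('d)"
  define K where "K p = (\<Sum>u\<in>{u::'d list. length u = p}. iter_int x 0 s u * iter_int y 0 t u)" for p
  define L where "L q = (\<Sum>v\<in>{v::'d list. length v = q}. iter_int x s T v * iter_int y t T v)" for q
  have Q0: "0 \<le> Q" unfolding Q_def using bounded_measurable_nonneg[OF x] st by simp
  have words_le: "\<bar>\<Sum>u\<in>{u::'d list. length u = p}. iter_int x a b u * iter_int y c e u\<bar> \<le> 1 * ((d * Q\<^sup>2) ^ p / fact p)"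
    if ab: "a \<in> {0..T}" "b \<in> {0..T}" "c \<in> {0..T}" "e \<in> {0..T}" for a b c e p
  proof -
    have "\<bar>\<Sum>u\<in>{u::'d list. length u = p}. iter_int x a b u * iter_int y c e u\<bar>
        \<le> d ^ p * (Q ^ p / fact p * (Q ^ p / fact p))"
      unfolding d_def
    proof (rule abs_sum_words_le)
      fix u :: "'d list" assume "length u = p"
      then show "\<bar>iter_int x a b u * iter_int y c e u\<bar> \<le> Q ^ p / fact p * (Q ^ p / fact p)"
        unfolding abs_mult Q_def
        using abs_iter_int_le_Icc[OF x ab(1,2), of u] abs_iter_int_le_Icc[OF y ab(3,4), of u] Q0
        by (intro mult_mono) (auto simp: Q_def)
    qed
    also have "\<dots> \<le> d ^ p * ((Q\<^sup>2) ^ p / fact p)"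
      using Q0 by (intro mult_left_mono fact_square_le) (simp_all add: d_def)
    finally show ?thesis by (simp add: power_mult_distrib)
  qed
  have ab: "0 \<in> {0..T}" "T \<in> {0..T}" using st by auto
  have K: "summable (\<lambda>p. norm (K p))"
    by (rule summable_exp_bound[where K=1 and L="d * Q\<^sup>2"])
       (use words_le[OF ab(1) st(1) ab(1) st(2)] in \<open>simp add: K_def\<close>)
  have L: "summable (\<lambda>q. norm (L q))"
    by (rule summable_exp_bound[where K=1 and L="d * Q\<^sup>2"])
       (use words_le[OF st(1) ab(2) st(2) ab(2)] in \<open>simp add: L_def\<close>)
  have degree_term: "(\<Sum>p\<le>n. K p * L (n - p)) * (g s \<bullet> y t) = kernel_deriv_density x g y T n s t" for n
    unfolding kernel_deriv_density_def sum_distrib_right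
  proof (rule sum.cong[OF refl])
    fix p
    show "K p * L (n - p) * (g s \<bullet> y t) = (\<Sum>u\<in>{u::'d list. length u = p}. \<Sum>v\<in>{v::'d list. length v = n - p}.
        \<Sum>i\<in>UNIV. split_integrand x g T u i v s * split_integrand y y T u i v t)"
      unfolding K_def L_def inner_vec_def split_integrand_def
      by (simp add: sum_product sum_distrib_left sum_distrib_right mult_ac) (rule sum.swap)
  qed
  have "iter_kernel x 0 s y 0 t * iter_kernel x s T y t T = (\<Sum>n. \<Sum>p\<le>n. K p * L (n - p))"
    unfolding iter_kernel_def K_def[symmetric] L_def[symmetric] by (rule Cauchy_product[OF K L])
  then show ?thesis
    using suminf_mult2[OF summable_Cauchy_product[OF K L], of "g s \<bullet> y t"] by (simp add: degree_term)
qed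

lemma integral_kernel_deriv_density:
  fixes x g y :: "real \<Rightarrow> real^'d"
  assumes x: "bounded_measurable M x" and g: "bounded_measurable M g" and y: "bounded_measurable M y"
  shows "(\<lambda>s. kernel_deriv_density x g y T n s t) integrable_on {0..T}"
    and "(\<lambda>t. integral {0..T} (\<lambda>s. kernel_deriv_density x g y T n s t)) integrable_on {0..T}"
    and "integral {0..T} (\<lambda>t. integral {0..T} (\<lambda>s. kernel_deriv_density x g y T n s t))
       = (\<Sum>w\<in>{w::'d list. length w = Suc n}. iter_int_deriv x g 0 T w * iter_int y 0 T w)"
proof -
  define A where "A u i v = integral {0..T} (split_integrand x g T u i v)" for u i v
  note finite = finite_words finite_atMost finite_class.finite_UNIV
  note int_x = integrable_on_split_integrand[OF x g] and int_y = integrable_on_split_integrand[OF y y]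
  show "(\<lambda>s. kernel_deriv_density x g y T n s t) integrable_on {0..T}"
    unfolding kernel_deriv_density_def by (intro integrable_sum finite integrable_on_mult_left int_x)
  have inner: "integral {0..T} (\<lambda>s. kernel_deriv_density x g y T n s t)
      = (\<Sum>p\<le>n. \<Sum>u\<in>{u::'d list. length u = p}. \<Sum>v\<in>{v::'d list. length v = n - p}.
          \<Sum>i\<in>UNIV. A u i v * split_integrand y y T u i v t)" for t
    unfolding kernel_deriv_density_def A_def
    by (simp add: integral_sum integrable_sum finite integrable_on_mult_left int_x)
  show "(\<lambda>t. integral {0..T} (\<lambda>s. kernel_deriv_density x g y T n s t)) integrable_on {0..T}"
    unfolding inner by (intro integrable_sum finite integrable_on_mult_right int_y)
  have chen: "integral {0..T} (split_integrand y y T u i v) = iter_int y 0 T (u @ i # v)" for u i v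
    unfolding split_integrand_def[abs_def] by (rule iter_int_append_Cons[OF y, symmetric])
  have subst: "A u i v = iter_int_subst x g x 0 T (u @ i # v) (length u)" for u i v
    by (simp add: A_def split_integrand_def[abs_def] iter_int_subst_def)
  have "integral {0..T} (\<lambda>t. integral {0..T} (\<lambda>s. kernel_deriv_density x g y T n s t))
      = (\<Sum>p\<le>n. \<Sum>u\<in>{u::'d list. length u = p}. \<Sum>v\<in>{v::'d list. length v = n - p}.
          \<Sum>i\<in>UNIV. iter_int_subst x g x 0 T (u @ i # v) (length u) * iter_int y 0 T (u @ i # v))"
    unfolding inner by (simp add: integral_sum integrable_sum finite integrable_on_mult_right int_y chen subst)
  also have "\<dots> = (\<Sum>w\<in>{w::'d list. length w = Suc n}. \<Sum>k<Suc n.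
      iter_int_subst x g x 0 T w k * iter_int y 0 T w)"
    unfolding sum_words_split[symmetric]
    by (intro sum.cong refl) (simp add: id_take_nth_drop[symmetric] min_absorb1)
  also have "\<dots> = (\<Sum>w\<in>{w::'d list. length w = Suc n}. iter_int_deriv x g 0 T w * iter_int y 0 T w)"
    by (intro sum.cong refl) (simp add: iter_int_deriv_def sum_distrib_right del: sum.lessThan_Suc)
  finally show "integral {0..T} (\<lambda>t. integral {0..T} (\<lambda>s. kernel_deriv_density x g y T n s t))
       = (\<Sum>w\<in>{w::'d list. length w = Suc n}. iter_int_deriv x g 0 T w * iter_int y 0 T w)" .
qed

lemma summable_Suc_exp_bound:
  fixes d Z :: real
  assumes d0: "0 \<le> d" and Z0: "0 \<le> Z"
  shows "summable (\<lambda>n. real (Suc n) * (d ^ Suc n * (K * (Z ^ n / fact n))))"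
proof (rule summable_exp_bound[where K="d * \<bar>K\<bar>" and L="2 * d * Z"])
  fix n
  have "Suc n \<le> 2 ^ n"
    using less_exp[of n] by (simp add: Suc_leI)
  then have "real (Suc n) \<le> 2 ^ n"
    by (metis of_nat_le_iff of_nat_numeral of_nat_power)
  then have "real (Suc n) * (d ^ Suc n * (\<bar>K\<bar> * (Z ^ n / fact n)))
      \<le> 2 ^ n * (d ^ Suc n * (\<bar>K\<bar> * (Z ^ n / fact n)))"
    using d0 Z0 by (intro mult_right_mono) simp_all
  moreover have "\<bar>real (Suc n) * (d ^ Suc n * (K * (Z ^ n / fact n)))\<bar>
      = real (Suc n) * (d ^ Suc n * (\<bar>K\<bar> * (Z ^ n / fact n)))"
    using d0 Z0 by (simp add: abs_mult)
  ultimately have "\<bar>real (Suc n) * (d ^ Suc n * (K * (Z ^ n / fact n)))\<bar>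
      \<le> 2 ^ n * (d ^ Suc n * (\<bar>K\<bar> * (Z ^ n / fact n)))"
    by simp
  then show "\<bar>real (Suc n) * (d ^ Suc n * (K * (Z ^ n / fact n)))\<bar> \<le> d * \<bar>K\<bar> * ((2 * d * Z) ^ n / fact n)"
    by (simp add: power_mult_distrib ac_simps)
qed

lemma iter_kernel_deriv_series_sums:
  fixes x g y :: "real \<Rightarrow> real^'d"
  assumes x: "bounded_measurable M x" and g: "bounded_measurable M g" and y: "bounded_measurable M y"
    and T: "0 \<le> T"
  shows "(\<lambda>j. \<Sum>w\<in>{w::'d list. length w = j}. iter_int_deriv x g 0 T w * iter_int y 0 T w) sums
           integral {0..T} (\<lambda>t. integral {0..T} (\<lambda>s. iter_kernel x 0 s y 0 t * iter_kernel x s T y t T * (g s \<bullet> y t)))"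
proof -
  define d where "d = real CARD('d)"
  define Z where "Z = (2 * (M * T))\<^sup>2"
  define B where "B n = real (Suc n) * (d ^ Suc n * (M\<^sup>2 * (Z ^ n / fact n)))" for n
  define I where "I n = (\<lambda>t. integral {0..T} (\<lambda>s. kernel_deriv_density x g y T n s t))" for n
  have Z0: "0 \<le> Z" and d0: "0 \<le> d" unfolding Z_def d_def by simp_all
  have B0: "0 \<le> B n" for n unfolding B_def using Z0 d0 by simp
  have B: "summable B"
    unfolding B_def using summable_Suc_exp_bound[OF d0 Z0, of "M\<^sup>2"] by simp
  have B_le: "\<bar>kernel_deriv_density x g y T n s t\<bar> \<le> B n" if "s \<in> {0..T}" "t \<in> {0..T}" for n s t
    unfolding B_def d_def Z_def by (rule abs_kernel_deriv_density_le[OF x g y that])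
  have inner: "(\<lambda>n. I n t) sums integral {0..T} (\<lambda>s. iter_kernel x 0 s y 0 t * iter_kernel x s T y t T * (g s \<bullet> y t))"
    if t: "t \<in> {0..T}" for t
  proof -
    have "(\<lambda>n. I n t) sums integral {0..T} (\<lambda>s. \<Sum>n. kernel_deriv_density x g y T n s t)"
      unfolding I_def using integral_kernel_deriv_density(1)[OF x g y] B_le t B B0
      by (intro integral_suminf_bounded) auto
    also have "integral {0..T} (\<lambda>s. \<Sum>n. kernel_deriv_density x g y T n s t)
        = integral {0..T} (\<lambda>s. iter_kernel x 0 s y 0 t * iter_kernel x s T y t T * (g s \<bullet> y t))"
      using iter_kernel_mult_expansion[OF x g y _ t] by (intro integral_cong) simp
    finally show ?thesis .
  qed
  have "(\<lambda>n. integral {0..T} (I n)) sums integral {0..T} (\<lambda>t. \<Sum>n. I n t)"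
  proof (rule integral_suminf_bounded[where B="\<lambda>n. B n * T"])
    show "\<bar>I n t\<bar> \<le> B n * T" if "t \<in> {0..T}" for n t
      unfolding I_def using integral_kernel_deriv_density(1)[OF x g y] B_le[OF _ that] that B0
      by (intro abs_integral_Icc_le) auto
  qed (use integral_kernel_deriv_density(2)[OF x g y] summable_mult2[OF B] in \<open>simp_all add: I_def\<close>)
  also have "integral {0..T} (\<lambda>t. \<Sum>n. I n t)
      = integral {0..T} (\<lambda>t. integral {0..T} (\<lambda>s. iter_kernel x 0 s y 0 t * iter_kernel x s T y t T * (g s \<bullet> y t)))"
    using inner by (intro integral_cong) (simp add: sums_unique[symmetric])
  finally have "(\<lambda>n. \<Sum>w\<in>{w::'d list. length w = Suc n}. iter_int_deriv x g 0 T w * iter_int y 0 T w) sums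
      integral {0..T} (\<lambda>t. integral {0..T} (\<lambda>s. iter_kernel x 0 s y 0 t * iter_kernel x s T y t T * (g s \<bullet> y t)))"
    by (simp add: I_def integral_kernel_deriv_density(3)[OF x g y])
  then show ?thesis
    using sums_Suc_iff[where f="\<lambda>j. \<Sum>w\<in>{w::'d list. length w = j}. iter_int_deriv x g 0 T w * iter_int y 0 T w"]
    by (simp add: iter_int_deriv_def)
qed

lemma has_real_derivative_iter_kernel:
  fixes x g y :: "real \<Rightarrow> real^'d"
  assumes "bounded_measurable M x" "bounded_measurable M g" "bounded_measurable M y" "0 \<le> T"
  shows "((\<lambda>e. iter_kernel (\<lambda>s. x s + e *\<^sub>R g s) 0 T y 0 T) has_real_derivative
           integral {0..T} (\<lambda>t. integral {0..T} (\<lambda>s. iter_kernel x 0 s y 0 t * iter_kernel x s T y t T * (g s \<bullet> y t)))) (at 0)"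
  using has_real_derivative_iter_kernel_series[OF assms] sums_unique[OF iter_kernel_deriv_series_sums[OF assms]]
  by simp

section \<open>Piecewise linear paths\<close>

lemma sorted_wrt_less_find_interval:
  fixes p :: "real list"
  assumes p: "p \<noteq> []" "sorted_wrt (<) p" and t: "hd p < t" "t < last p" "t \<notin> set p"
  obtains k where "k < length p - 1" "p ! k < t" "t < p ! Suc k"
proof -
  define K where "K = {k. k < length p \<and> p ! k < t}"
  define k where "k = Max K"
  have fin: "finite K" and "0 \<in> K"
    unfolding K_def using p t by (auto simp: hd_conv_nth)
  then have "k \<in> K"
    unfolding k_def by (intro Max_in) auto
  then have k: "k < length p" "p ! k < t"
    by (auto simp: K_def)
  have k_max: "j \<le> k" if "j \<in> K" for j
    unfolding k_def using Max_ge[OF fin that] .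
  have "k \<noteq> length p - 1"
    using k t p by (auto simp: last_conv_nth)
  then have k1: "k < length p - 1" using k by simp
  have "Suc k < length p" using k1 by linarith
  then have "p ! Suc k \<noteq> t" and "\<not> p ! Suc k < t"
    using t(3) k_max[of "Suc k"] nth_mem[of "Suc k" p] unfolding K_def by auto
  then have "t < p ! Suc k" by linarith
  then show ?thesis using that k1 k by blast
qed

lemma sorted_wrt_less_intervals_disjoint:
  fixes p :: "real list"
  assumes p: "sorted_wrt (<) p" and jk: "j < length p - 1" "k < length p - 1" "j \<noteq> k"
    and t: "t \<in> {p!k<..<p!Suc k}"
  shows "t \<notin> {p!j<..<p!Suc j}"
proof -
  have mono: "p ! i \<le> p ! l" if "i \<le> l" "l < length p" for i l
    using sorted_wrt_nth_less[OF p, of i l] that by (cases "i = l") auto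
  consider "Suc j \<le> k" | "Suc k \<le> j" using jk(3) by linarith
  then show ?thesis
  proof cases
    case 1
    then have "p ! Suc j \<le> p ! k" using jk by (intro mono) auto
    then show ?thesis using t by auto
  next
    case 2
    then have "p ! Suc k \<le> p ! j" using jk by (intro mono) auto
    then show ?thesis using t by auto
  qed
qed

lemma bounded_measurable_step:
  fixes B :: "nat \<Rightarrow> real^'d"
  assumes [measurable]: "\<And>k. I k \<in> sets borel"
  shows "bounded_measurable (\<Sum>k<n. norm (B k)) (\<lambda>t. \<Sum>k<n. indicator (I k) t *\<^sub>R B k)"
  unfolding bounded_measurable_def
proof (intro conjI allI)
  have component: "(\<Sum>k<n. indicator (I k) t *\<^sub>R B k) $ i = (\<Sum>k<n. indicator (I k) t * B k $ i)" for t i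
    by (simp add: sum_component)
  show "(\<lambda>t. (\<Sum>k<n. indicator (I k) t *\<^sub>R B k) $ i) \<in> borel_measurable borel" for i
    unfolding component by measurable
  fix t i
  have "\<bar>(\<Sum>k<n. indicator (I k) t *\<^sub>R B k) $ i\<bar> \<le> (\<Sum>k<n. \<bar>indicator (I k) t * B k $ i\<bar>)"
    unfolding component by (rule sum_abs)
  also have "\<dots> \<le> (\<Sum>k<n. norm (B k))"
    by (intro sum_mono) (simp add: indicator_def component_le_norm_cart)
  finally show "\<bar>(\<Sum>k<n. indicator (I k) t *\<^sub>R B k) $ i\<bar> \<le> (\<Sum>k<n. norm (B k))" .
qed

definition velocity_off :: "real \<Rightarrow> real set \<Rightarrow> (real \<Rightarrow> real^'d) \<Rightarrow> (real \<Rightarrow> real^'d) \<Rightarrow> bool" where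
  "velocity_off T S Z f \<longleftrightarrow> (\<forall>t\<in>{0..T} - S. (Z has_vector_derivative f t) (at t))"

lemma pw_linear_derivative:
  fixes Z :: "real \<Rightarrow> real^'d"
  assumes "pw_linear T Z"
  obtains S M f where "finite S" "bounded_measurable M f" "velocity_off T S Z f"
proof -
  obtain p where p: "p \<noteq> []" "hd p = 0" "last p = T" "sorted_wrt (<) p"
    and lin: "\<forall>k < length p - 1. \<exists>a b. \<forall>t\<in>{p!k..p!(Suc k)}. Z t = a + t *\<^sub>R b"
    using assms unfolding pw_linear_def by blast
  have "\<forall>k. \<exists>ab. k < length p - 1 \<longrightarrow> (\<forall>t\<in>{p!k..p!(Suc k)}. Z t = fst ab + t *\<^sub>R snd ab)"
    using lin by fastforce
  then obtain AB where AB: "\<forall>k. k < length p - 1 \<longrightarrow> (\<forall>t\<in>{p!k..p!(Suc k)}. Z t = fst (AB k) + t *\<^sub>R snd (AB k))"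
    by (rule choice[THEN exE]) blast
  define n where "n = length p - 1"
  define f where "f t = (\<Sum>k<n. indicator {p!k<..<p!Suc k} t *\<^sub>R snd (AB k))" for t
  have "(Z has_vector_derivative f t) (at t)" if t: "t \<in> {0..T} - set p" for t
  proof -
    obtain k where k: "k < n" "p ! k < t" "t < p ! Suc k"
    proof -
      have "hd p \<in> set p" "last p \<in> set p" using p(1) by simp_all
      then have "hd p < t" "t < last p" using t p(2,3) by (auto simp: less_le)
      then show ?thesis
        using sorted_wrt_less_find_interval[OF p(1,4)] t that unfolding n_def by blast
    qed
    have "indicator {p!j<..<p!Suc j} t *\<^sub>R snd (AB j) = (if j = k then snd (AB k) else 0)" if "j < n" for j
      using sorted_wrt_less_intervals_disjoint[OF p(4), of j k t] that k
      by (cases "j = k") (simp_all add: n_def)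
    then have fk: "f t = snd (AB k)"
      unfolding f_def using k(1) by simp
    have "((\<lambda>s. fst (AB k) + s *\<^sub>R snd (AB k)) has_vector_derivative snd (AB k)) (at t)"
      by (auto intro!: derivative_eq_intros)
    then show ?thesis
      unfolding fk
    proof (rule has_vector_derivative_transform_within_open[where S="{p!k<..<p!Suc k}"])
      fix s assume "s \<in> {p!k<..<p!Suc k}"
      then show "fst (AB k) + s *\<^sub>R snd (AB k) = Z s"
        using AB k(1) by (simp add: n_def)
    qed (use k in simp_all)
  qed
  moreover have "bounded_measurable (\<Sum>k<n. norm (snd (AB k))) f"
    unfolding f_def[abs_def] by (rule bounded_measurable_step) simp
  ultimately show ?thesis
    using that[of "set p" _ f] unfolding velocity_off_def by blast
qed

lemma iter_int_cong_ae:
  fixes F f :: "real \<Rightarrow> real^'d"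
  assumes S: "finite S" and eq: "\<And>t. t \<in> {0..T} - S \<Longrightarrow> F t = f t"
    and "a \<in> {0..T}" "b \<in> {0..T}"
  shows "iter_int F a b w = iter_int f a b w"
  using assms(3)
proof (induction w arbitrary: a)
  case (Cons i w)
  show ?case
    unfolding iter_int.simps
  proof (rule integral_spike[where S=S])
    fix s assume "s \<in> {a..b} - S"
    then show "f s $ i * iter_int f s b w = F s $ i * iter_int F s b w"
      using eq[of s] Cons.IH[of s] Cons.prems assms(4) by auto
  qed (use S in auto)
qed simp

lemma velocity_off_dot: "velocity_off T S Z f \<Longrightarrow> t \<in> {0..T} - S \<Longrightarrow> dot Z t = f t"
  unfolding velocity_off_def dot_def by (auto intro: vector_derivative_at)

lemma velocity_off_mono: "velocity_off T S Z f \<Longrightarrow> S \<subseteq> S' \<Longrightarrow> velocity_off T S' Z f"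
  unfolding velocity_off_def by blast

lemma velocity_off_add_scaleR:
  "velocity_off T S X f \<Longrightarrow> velocity_off T S G g \<Longrightarrow>
     velocity_off T S (\<lambda>r. X r + e *\<^sub>R G r) (\<lambda>r. f r + e *\<^sub>R g r)"
  unfolding velocity_off_def by (auto intro!: derivative_eq_intros)

lemma velocity_off_rev_path:
  assumes "velocity_off T S Z f"
  shows "velocity_off T (S \<union> (\<lambda>r. T - r) ` S) (rev_path T Z) (\<lambda>r. - f (T - r))"
  unfolding velocity_off_def
proof
  fix r assume r: "r \<in> {0..T} - (S \<union> (\<lambda>r. T - r) ` S)"
  then have "T - r \<in> {0..T} - S"
    by (auto simp: image_iff)
  then have "(Z has_vector_derivative f (T - r)) (at (T - r))"
    using assms unfolding velocity_off_def by blast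
  then have "((Z \<circ> (\<lambda>r. T - r)) has_vector_derivative (-1) *\<^sub>R f (T - r)) (at r)"
    by (intro vector_diff_chain_at) (auto intro!: derivative_eq_intros)
  then show "(rev_path T Z has_vector_derivative - f (T - r)) (at r)"
    by (simp add: rev_path_def[abs_def] o_def)
qed

lemma sigker_eq_iter_kernel_off:
  assumes "finite S" "velocity_off T S Z f" "velocity_off T S W g"
    and "a \<in> {0..T}" "b \<in> {0..T}" "c \<in> {0..T}" "e \<in> {0..T}"
  shows "sigker Z a b W c e = iter_kernel f a b g c e"
proof -
  have dZ: "\<And>t. t \<in> {0..T} - S \<Longrightarrow> dot Z t = f t" and dW: "\<And>t. t \<in> {0..T} - S \<Longrightarrow> dot W t = g t"
    using velocity_off_dot[OF assms(2)] velocity_off_dot[OF assms(3)] by blast+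
  have "iter_int (dot Z) a b w = iter_int f a b w" "iter_int (dot W) c e w = iter_int g c e w" for w
    using iter_int_cong_ae[where F="dot Z" and f=f, OF assms(1) dZ assms(4,5)]
      iter_int_cong_ae[where F="dot W" and f=g, OF assms(1) dW assms(6,7)] by blast+
  then show ?thesis
    by (simp add: sigker_eq_iter_kernel iter_kernel_def)
qed

lemma iter_kernel_reverse:
  fixes f g :: "real \<Rightarrow> real^'d"
  assumes "bounded_measurable M f" "bounded_measurable M' g"
  shows "iter_kernel (\<lambda>r. - f (T - r)) 0 (T - s) (\<lambda>r. - g (T - r)) 0 (T - t) = iter_kernel f s T g t T"
  unfolding iter_kernel_def
proof (intro arg_cong[where f=suminf] ext)
  fix j
  have "(\<Sum>w\<in>{w::'d list. length w = j}. iter_int (\<lambda>r. - f (T - r)) 0 (T - s) w * iter_int (\<lambda>r. - g (T - r)) 0 (T - t) w)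
      = (\<Sum>w\<in>{w::'d list. length w = j}. iter_int f s T (rev w) * iter_int g t T (rev w))"
    by (intro sum.cong refl)
       (simp add: iter_int_reverse[OF assms(1)] iter_int_reverse[OF assms(2)] ac_simps flip: power_mult_distrib)
  also have "\<dots> = (\<Sum>w\<in>{w::'d list. length w = j}. iter_int f s T w * iter_int g t T w)"
    by (rule sum.reindex_bij_witness[where i=rev and j=rev]) auto
  finally show "(\<Sum>w\<in>{w::'d list. length w = j}. iter_int (\<lambda>r. - f (T - r)) 0 (T - s) w * iter_int (\<lambda>r. - g (T - r)) 0 (T - t) w)
      = (\<Sum>w\<in>{w::'d list. length w = j}. iter_int f s T w * iter_int g t T w)" .
qed

lemma double_integral_spike_finite:
  fixes F G :: "real \<Rightarrow> real \<Rightarrow> real"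
  assumes "finite S" and "\<And>s t. s \<in> {a..b} - S \<Longrightarrow> t \<in> {a..b} - S \<Longrightarrow> F s t = G s t"
  shows "integral {a..b} (\<lambda>t. integral {a..b} (\<lambda>s. F s t)) = integral {a..b} (\<lambda>t. integral {a..b} (\<lambda>s. G s t))"
  using assms by (intro integral_spike[where S=S] integral_spike[where S=S]) (auto simp: negligible_finite)

theorem theorem4p1:
  fixes T :: real and X Y \<gamma> :: "real \<Rightarrow> real^'d"
  assumes "T > 0"
    and "pw_linear T X" and "pw_linear T Y" and "pw_linear T \<gamma>"
  shows "((\<lambda>\<epsilon>. sigker (\<lambda>r. X r + \<epsilon> *\<^sub>R \<gamma> r) 0 T Y 0 T) has_real_derivative
           integral {0..T} (\<lambda>t. integral {0..T} (\<lambda>s.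
              sigker X 0 s Y 0 t
            * sigker (rev_path T X) 0 (T - s) (rev_path T Y) 0 (T - t)
            * (dot \<gamma> s \<bullet> dot Y t)))) (at 0)"
proof -
  obtain SX MX fX SY MY fY SG MG fG where
    fin: "finite SX" "finite SY" "finite SG" and
    bm: "bounded_measurable MX fX" "bounded_measurable MY fY" "bounded_measurable MG fG" and
    vel: "velocity_off T SX X fX" "velocity_off T SY Y fY" "velocity_off T SG \<gamma> fG"
    using pw_linear_derivative[OF assms(2)] pw_linear_derivative[OF assms(3)] pw_linear_derivative[OF assms(4)]
    by metis
  define M where "M = max MX (max MY MG)"
  define S where "S = SX \<union> SY \<union> SG \<union> (\<lambda>r. T - r) ` (SX \<union> SY \<union> SG)"
  have fS: "finite S" using fin by (simp add: S_def)
  have bmM: "bounded_measurable M fX" "bounded_measurable M fY" "bounded_measurable M fG"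
    using bm by (auto intro: bounded_measurable_mono simp: M_def)
  have velS: "velocity_off T S X fX" "velocity_off T S Y fY" "velocity_off T S \<gamma> fG"
    "velocity_off T S (rev_path T X) (\<lambda>r. - fX (T - r))" "velocity_off T S (rev_path T Y) (\<lambda>r. - fY (T - r))"
    using vel velocity_off_rev_path[OF vel(1)] velocity_off_rev_path[OF vel(2)]
    by (auto elim!: velocity_off_mono simp: S_def)
  have "(\<lambda>\<epsilon>. sigker (\<lambda>r. X r + \<epsilon> *\<^sub>R \<gamma> r) 0 T Y 0 T) = (\<lambda>\<epsilon>. iter_kernel (\<lambda>r. fX r + \<epsilon> *\<^sub>R fG r) 0 T fY 0 T)"
    using assms(1) by (intro ext sigker_eq_iter_kernel_off[OF fS velocity_off_add_scaleR velS(2)] velS) auto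
  moreover have "integral {0..T} (\<lambda>t. integral {0..T} (\<lambda>s. sigker X 0 s Y 0 t
      * sigker (rev_path T X) 0 (T - s) (rev_path T Y) 0 (T - t) * (dot \<gamma> s \<bullet> dot Y t)))
    = integral {0..T} (\<lambda>t. integral {0..T} (\<lambda>s. iter_kernel fX 0 s fY 0 t * iter_kernel fX s T fY t T * (fG s \<bullet> fY t)))"
    by (intro double_integral_spike_finite[OF fS])
       (simp add: sigker_eq_iter_kernel_off[OF fS velS(1,2)] sigker_eq_iter_kernel_off[OF fS velS(4,5)]
         iter_kernel_reverse[OF bmM(1,2)] velocity_off_dot[OF velS(3)] velocity_off_dot[OF velS(2)])
  ultimately show ?thesis
    using has_real_derivative_iter_kernel[OF bmM(1,3,2)] assms(1) by simp
qed

end
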